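(* For all $h\ge1$ and $i_1,\dots,i_h,j_1,\dots,j_h\in\{1,\dots,n\}$, $\mathcal K\big([i_1,\dots,i_h|j_1,\dots,j_h]\big)=(-1)^{\binom h2}(i_1|j_1)(i_2|j_2)\cdots(i_h|j_h)\in\mathbb{C}[M_{n,n}]$.
   Context: $\mathbb{C}[M_{n,n}]$ is the polynomial algebra in commuting indeterminates $(i|j)$, $1\le i,j\le n$. $D^l_{ij}$ is the derivation of $\mathbb{C}[M_{n,n}]$ with $D^l_{ij}((h|k))=\delta_{jh}(i|k)$. Let $\rho_{ij}(\mathbf p)=D^l_{ij}(\mathbf p)+(i|j)\mathbf p$; the map $e_{ij}\mapsto\rho_{ij}$ extends to an algebra morphism $\tau:\mathbf{U}(gl(n))\to\mathrm{End}_{\mathbb C}(\mathbb{C}[M_{n,n}])$. The Koszul map is the linear map $\mathcal K:\mathbf{U}(gl(n))\to\mathbb{C}[M_{n,n}]$, $\mathcal K(\mathbf P)=\tau(\mathbf P)(1)$. Virtual variables: $A_0=\{\alpha_1,\dots,\alpha_{m_0}\}$ (parity $0$), $A_1=\{\beta_1,\dots,\beta_{m_1}\}$ (parity $1$), $L=\{1,\dots,n\}$ (parity $1$), $m_0,m_1$ large; $gl(m_0|m_1+n)$ has homogeneous basis $e_{a,b}$ of parity $|a|+|b|$ and superbracket $[e_{a,b},e_{c,d}]=\delta_{bc}e_{a,d}-(-1)^{(|a|+|b|)(|c|+|d|)}\delta_{ad}e_{c,b}$, with $\mathbf{U}(gl(n))\subset\mathbf{U}(gl(m_0|m_1+n))$.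 A product $e_{a_m,b_m}\cdots e_{a_1,b_1}$ is irregular if for some $i\le m$ and virtual $\gamma$, $\#\{j\le i:b_j=\gamma\}>\#\{j<i:a_j=\gamma\}$; $\mathbf{Irr}$ is the left ideal they generate; it is known $Virt=\mathbf{U}(gl(n))\oplus\mathbf{Irr}$ is a subalgebra with $\mathbf{Irr}$ a two-sided ideal, and $\mathfrak p$ is the projection $Virt\to\mathbf{U}(gl(n))$ with kernel $\mathbf{Irr}$. The column Capelli bitableau is $[i_1,\dots,i_h|j_1,\dots,j_h]=\mathfrak p(e_{i_1\alpha_1}\cdots e_{i_h\alpha_h}e_{\alpha_1j_1}\cdots e_{\alpha_hj_h})$ with distinct positive virtual $\alpha_1,\dots,\alpha_h$. *)

theory Defs
  imports Complex_Main "HOL-Library.Poly_Mapping"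
begin

text \<open>Polynomials in commuting indeterminates (i|j): monomials are finitely supported
  exponent maps on index pairs; polynomials are finitely supported coefficient maps.\<close>
type_synonym cpoly = "((nat \<times> nat) \<Rightarrow>\<^sub>0 nat) \<Rightarrow>\<^sub>0 complex"

definition var :: "nat \<Rightarrow> nat \<Rightarrow> cpoly" where
  "var i j = Poly_Mapping.single (Poly_Mapping.single (i, j) 1) 1"

definition const :: "complex \<Rightarrow> cpoly" where
  "const c = Poly_Mapping.single 0 c"

text \<open>The derivation D^l_{ij}, D^l_{ij}((h|k)) = delta_{jh} (i|k), extended as a derivation:
  on a monomial m it gives sum_k m(j,k) * (m / (j|k)) * (i|k).\<close>
definition Dl :: "nat \<Rightarrow> nat \<Rightarrow> nat \<Rightarrow> cpoly \<Rightarrow> cpoly" where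
  "Dl n i j p = (\<Sum>(m::(nat \<times> nat) \<Rightarrow>\<^sub>0 nat)\<in>Poly_Mapping.keys p. \<Sum>k\<in>{1..n}.
      Poly_Mapping.single (m - Poly_Mapping.single (j, k) 1 + Poly_Mapping.single (i, k) 1)
        (Poly_Mapping.lookup p m * of_nat (Poly_Mapping.lookup m (j, k))))"

definition rho :: "nat \<Rightarrow> nat \<Rightarrow> nat \<Rightarrow> cpoly \<Rightarrow> cpoly" where
  "rho n i j p = Dl n i j p + var i j * p"

text \<open>Alpha k: positive virtual symbols (parity 0); Beta k: negative virtual symbols (parity 1);
  Prop i: proper symbols (parity 1), meaningful for 1 \<le> i \<le> n.  The virtual alphabets are
  taken countably infinite (the limit of "m_0, m_1 large").\<close>
datatype sym = Alpha nat | Beta nat | Prop nat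

fun par :: "sym \<Rightarrow> nat" where
  "par (Alpha _) = 0" | "par (Beta _) = 1" | "par (Prop _) = 1"

fun virtual :: "sym \<Rightarrow> bool" where
  "virtual (Prop _) = False" | "virtual _ = True"

fun valid_sym :: "nat \<Rightarrow> sym \<Rightarrow> bool" where
  "valid_sym n (Prop i) = (1 \<le> i \<and> i \<le> n)" | "valid_sym n _ = True"

fun pidx :: "sym \<Rightarrow> nat" where
  "pidx (Prop i) = i" | "pidx _ = 0"

type_synonym letter = "sym \<times> sym"   \<comment> \<open>(a,b) stands for e_{a,b}\<close>

text \<open>Free associative algebra on the letters: a word [l_1,...,l_k] stands for the
  product e_{l_1} ... e_{l_k} (written left to right).\<close>
type_synonym fa = "letter list \<Rightarrow>\<^sub>0 complex"

definition fmul :: "fa \<Rightarrow> fa \<Rightarrow> fa" where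
  "fmul x y = (\<Sum>u\<in>Poly_Mapping.keys x. \<Sum>v\<in>Poly_Mapping.keys y. Poly_Mapping.single (u @ v) (Poly_Mapping.lookup x u * Poly_Mapping.lookup y v))"

definition fscal :: "complex \<Rightarrow> fa" where
  "fscal c = Poly_Mapping.single [] c"

definition e :: "sym \<Rightarrow> sym \<Rightarrow> fa" where
  "e a b = Poly_Mapping.single [(a, b)] 1"

definition valid_word :: "nat \<Rightarrow> letter list \<Rightarrow> bool" where
  "valid_word n w = (\<forall>l\<in>set w. valid_sym n (fst l) \<and> valid_sym n (snd l))"

definition valid_el :: "nat \<Rightarrow> fa \<Rightarrow> bool" where
  "valid_el n x = (\<forall>w\<in>Poly_Mapping.keys x. valid_word n w)"

definition sgn :: "sym \<Rightarrow> sym \<Rightarrow> sym \<Rightarrow> sym \<Rightarrow> complex" where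
  "sgn a b c d = (-1) ^ ((par a + par b) * (par c + par d))"

text \<open>Defining relation of U(gl(m_0|m_1+n)):
  e_{ab} e_{cd} - sgn e_{cd} e_{ab} = delta_{bc} e_{ad} - sgn delta_{ad} e_{cb}.\<close>
definition rel :: "sym \<Rightarrow> sym \<Rightarrow> sym \<Rightarrow> sym \<Rightarrow> fa" where
  "rel a b c d =
     fmul (e a b) (e c d) - fmul (fscal (sgn a b c d)) (fmul (e c d) (e a b))
     - ((if b = c then e a d else 0) - fmul (fscal (sgn a b c d)) (if a = d then e c b else 0))"

text \<open>Two-sided ideal of the free algebra (on valid letters) generated by the relations;
  the quotient is U(gl(m_0|m_1+n)).\<close>
inductive_set Jid :: "nat \<Rightarrow> fa set" for n where
  gen: "valid_sym n a \<Longrightarrow> valid_sym n b \<Longrightarrow> valid_sym n c \<Longrightarrow> valid_sym n d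
        \<Longrightarrow> rel a b c d \<in> Jid n"
| zero: "0 \<in> Jid n"
| add: "x \<in> Jid n \<Longrightarrow> y \<in> Jid n \<Longrightarrow> x + y \<in> Jid n"
| mult: "x \<in> Jid n \<Longrightarrow> valid_el n u \<Longrightarrow> valid_el n v \<Longrightarrow> fmul u (fmul x v) \<in> Jid n"

text \<open>For a word w = [l_m, ..., l_1] (product e_{a_m b_m} ... e_{a_1 b_1}),
  r = rev w lists the letters as l_1, ..., l_m (0-based).\<close>
definition irregular :: "letter list \<Rightarrow> bool" where
  "irregular w = (let r = rev w in
     \<exists>i < length r. \<exists>\<gamma>. virtual \<gamma> \<and>
       length (filter (\<lambda>l. snd l = \<gamma>) (take (Suc i) r))
         > length (filter (\<lambda>l. fst l = \<gamma>) (take i r)))"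

text \<open>Preimage in the free algebra of the left ideal Irr of U(gl(m_0|m_1+n)) generated by
  the irregular monomials.\<close>
inductive_set Irr :: "nat \<Rightarrow> fa set" for n where
  rels: "x \<in> Jid n \<Longrightarrow> x \<in> Irr n"
| gen: "valid_word n w \<Longrightarrow> irregular w \<Longrightarrow> valid_el n u
        \<Longrightarrow> fmul u (Poly_Mapping.single w 1) \<in> Irr n"
| zero: "0 \<in> Irr n"
| add: "x \<in> Irr n \<Longrightarrow> y \<in> Irr n \<Longrightarrow> x + y \<in> Irr n"

text \<open>Elements of the free algebra on proper letters e_{ij}, 1 \<le> i,j \<le> n: representatives of
  elements of U(gl(n)).\<close>
definition proper_word :: "nat \<Rightarrow> letter list \<Rightarrow> bool" where
  "proper_word n w = (\<forall>l\<in>set w. \<exists>i j. l = (Prop i, Prop j) \<and> i \<in> {1..n} \<and> j \<in> {1..n})"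

definition proper :: "nat \<Rightarrow> fa \<Rightarrow> bool" where
  "proper n x = (\<forall>w\<in>Poly_Mapping.keys x. proper_word n w)"

text \<open>The projection p : Virt -> U(gl(n)) with kernel Irr (a representative of the U(gl(n))
  component).\<close>
definition proj :: "nat \<Rightarrow> fa \<Rightarrow> fa" where
  "proj n x = (SOME u. proper n u \<and> x - u \<in> Irr n)"

text \<open>tau on representatives: a word e_{l_1} ... e_{l_k} acts as rho_{l_1} o ... o rho_{l_k}.\<close>
definition rho_word :: "nat \<Rightarrow> letter list \<Rightarrow> cpoly \<Rightarrow> cpoly" where
  "rho_word n w p = foldr (\<lambda>l q. rho n (pidx (fst l)) (pidx (snd l)) q) w p"

text \<open>Koszul map K(P) = tau(P)(1).\<close>
definition koszul :: "nat \<Rightarrow> fa \<Rightarrow> cpoly" where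
  "koszul n x = (\<Sum>w\<in>Poly_Mapping.keys x. const (Poly_Mapping.lookup x w) * rho_word n w 1)"

definition capelli_word :: "nat \<Rightarrow> (nat \<Rightarrow> nat) \<Rightarrow> (nat \<Rightarrow> nat) \<Rightarrow> (nat \<Rightarrow> nat) \<Rightarrow> letter list" where
  "capelli_word h i j \<alpha> =
     map (\<lambda>t. (Prop (i t), Alpha (\<alpha> t))) [1..<h+1] @ map (\<lambda>t. (Alpha (\<alpha> t), Prop (j t))) [1..<h+1]"

definition capelli :: "nat \<Rightarrow> nat \<Rightarrow> (nat \<Rightarrow> nat) \<Rightarrow> (nat \<Rightarrow> nat) \<Rightarrow> (nat \<Rightarrow> nat) \<Rightarrow> fa" where
  "capelli n h i j \<alpha> = proj n (Poly_Mapping.single (capelli_word h i j \<alpha>) 1)"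

end

theory Submission
  imports Defs "HOL-Library.Nat_Bijection"
begin

text \<open>
  We let \<open>U(gl(m_0|m_1+n))\<close> act on a Fock space: the supersymmetric algebra in letterplace
  variables \<open>x(a,k)\<close> (\<open>a\<close> a symbol, \<open>k\<close> a place), where \<open>x(a,k)\<close> is odd exactly when \<open>a\<close> is a
  positive virtual symbol.  The generator \<open>e(a,b)\<close> acts by the superpolarization
  \<open>\<Sum>k=1..n. x(a,k) \<partial>(b,k)\<close>, plus multiplication by \<open>x(a,j)\<close> when \<open>b\<close> is the proper symbol \<open>j\<close>;
  on polynomials in the proper variables this is exactly \<open>\<rho>\<close>.  The defining relations hold
  in this action, and an irregular monomial kills the vacuum \<open>1\<close>, because applied from the
  right it lowers the degree in some virtual symbol below zero.  Hence the Koszul image of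
  the projection of \<open>P\<close> is obtained by applying \<open>P\<close> itself to \<open>1\<close>.  For the Capelli monomial the
  creations \<open>e(\<alpha>_t,j_t)\<close> produce the odd product \<open>x(\<alpha>_1,j_1) \<cdots> x(\<alpha>_h,j_h)\<close>, and each
  annihilation \<open>e(i_t,\<alpha>_t)\<close> replaces its own odd factor by \<open>(i_t|j_t)\<close> after passing \<open>t - 1\<close> odd
  factors, which produces the sign \<open>(-1)^(h choose 2)\<close>.

  That the projection is defined on balanced words is shown by straightening: modulo the
  relations, every balanced word is a combination of proper words and irregular words.
\<close>

definition cscale :: "complex \<Rightarrow> ('a \<Rightarrow>\<^sub>0 complex) \<Rightarrow> ('a \<Rightarrow>\<^sub>0 complex)" where
  "cscale c p = Poly_Mapping.map ((*) c) p"

lemma lookup_cscale [simp]: "Poly_Mapping.lookup (cscale c p) k = c * Poly_Mapping.lookup p k"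
  unfolding cscale_def by transfer (simp add: when_def)

lemma cscale_add: "cscale c (p + q) = cscale c p + cscale c q"
  by (rule poly_mapping_eqI) (simp add: lookup_add algebra_simps)
lemma cscale_diff: "cscale c (p - q) = cscale c p - cscale c q"
  by (rule poly_mapping_eqI) (simp add: lookup_minus algebra_simps)
lemma cscale_uminus: "cscale c (- p) = - cscale c p"
  by (rule poly_mapping_eqI) simp
lemma cscale_zero [simp]: "cscale c 0 = 0"
  by (rule poly_mapping_eqI) simp
lemma cscale_0 [simp]: "cscale 0 p = 0"
  by (rule poly_mapping_eqI) simp
lemma cscale_1 [simp]: "cscale 1 p = p"
  by (rule poly_mapping_eqI) simp
lemma cscale_minus_one: "cscale (-1) p = - p"
  by (rule poly_mapping_eqI) simp
lemma cscale_cscale [simp]: "cscale c (cscale d p) = cscale (c*d) p"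
  by (rule poly_mapping_eqI) simp
lemma cscale_left_distrib: "cscale (c + d) p = cscale c p + cscale d p"
  by (rule poly_mapping_eqI) (simp add: lookup_add algebra_simps)
lemma cscale_single [simp]: "cscale c (Poly_Mapping.single k a) = Poly_Mapping.single k (c*a)"
  by (rule poly_mapping_eqI) (simp add: lookup_single when_def)
lemma cscale_sum: "cscale c (sum f A) = sum (\<lambda>x. cscale c (f x)) A"
  by (induction A rule: infinite_finite_induct) (auto simp: cscale_add)

definition lin_ext :: "('a \<Rightarrow> 'b \<Rightarrow>\<^sub>0 complex) \<Rightarrow> ('a \<Rightarrow>\<^sub>0 complex) \<Rightarrow> 'b \<Rightarrow>\<^sub>0 complex" where
  "lin_ext F p = (\<Sum>m\<in>Poly_Mapping.keys p. cscale (Poly_Mapping.lookup p m) (F m))"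

lemma lin_ext_superset:
  assumes "finite A" "Poly_Mapping.keys p \<subseteq> A"
  shows "lin_ext F p = (\<Sum>m\<in>A. cscale (Poly_Mapping.lookup p m) (F m))"
  unfolding lin_ext_def
  by (rule sum.mono_neutral_left) (use assms in \<open>auto simp: in_keys_iff\<close>)

lemma lin_ext_add: "lin_ext F (p + q) = lin_ext F p + lin_ext F q"
proof -
  let ?A = "Poly_Mapping.keys p \<union> Poly_Mapping.keys q"
  have k: "Poly_Mapping.keys (p+q) \<subseteq> ?A" by (rule keys_add)
  show ?thesis
    by (simp add: lin_ext_superset[OF _ k] lin_ext_superset[of ?A p] lin_ext_superset[of ?A q]
        lookup_add cscale_left_distrib sum.distrib)
qed

lemma lin_ext_zero [simp]: "lin_ext F 0 = 0"
  by (simp add: lin_ext_def)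

lemma lin_ext_cscale: "lin_ext F (cscale c p) = cscale c (lin_ext F p)"
proof -
  have k: "Poly_Mapping.keys (cscale c p) \<subseteq> Poly_Mapping.keys p" by (auto simp: in_keys_iff)
  have "lin_ext F (cscale c p) = (\<Sum>m\<in>Poly_Mapping.keys p. cscale (Poly_Mapping.lookup (cscale c p) m) (F m))"
    by (rule lin_ext_superset) (use k in auto)
  then show ?thesis by (simp add: lin_ext_def cscale_sum)
qed

lemma lin_ext_single [simp]: "lin_ext F (Poly_Mapping.single m c) = cscale c (F m)"
  by (simp add: lin_ext_def)

lemma lin_ext_uminus: "lin_ext F (- p) = - lin_ext F p"
  using lin_ext_cscale[of F "-1" p] by (simp add: cscale_minus_one)

lemma lin_ext_diff: "lin_ext F (p - q) = lin_ext F p - lin_ext F q"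
  using lin_ext_add[of F p "-q"] by (simp add: lin_ext_uminus)

lemma lin_ext_sum: "lin_ext F (sum f A) = sum (\<lambda>x. lin_ext F (f x)) A"
  by (induction A rule: infinite_finite_induct) (auto simp: lin_ext_add)

lemma keys_lin_ext: "Poly_Mapping.keys (lin_ext F p) \<subseteq> (\<Union>m\<in>Poly_Mapping.keys p. Poly_Mapping.keys (F m))"
proof -
  have "Poly_Mapping.keys (lin_ext F p) \<subseteq> (\<Union>m\<in>Poly_Mapping.keys p. Poly_Mapping.keys (cscale (Poly_Mapping.lookup p m) (F m)))"
    unfolding lin_ext_def by (rule keys_sum)
  also have "\<dots> \<subseteq> (\<Union>m\<in>Poly_Mapping.keys p. Poly_Mapping.keys (F m))"
    by (auto simp: in_keys_iff)
  finally show ?thesis .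
qed

lemma lin_ext_zero_fun: "(\<And>m. m \<in> Poly_Mapping.keys p \<Longrightarrow> F m = 0) \<Longrightarrow> lin_ext F p = 0"
  by (simp add: lin_ext_def)

lemma lin_ext_cong: "(\<And>m. m \<in> Poly_Mapping.keys p \<Longrightarrow> F m = G m) \<Longrightarrow> lin_ext F p = lin_ext G p"
  by (simp add: lin_ext_def)

definition is_linear :: "(('a \<Rightarrow>\<^sub>0 complex) \<Rightarrow> ('b \<Rightarrow>\<^sub>0 complex)) \<Rightarrow> bool" where
  "is_linear f \<longleftrightarrow> (\<forall>p q. f (p + q) = f p + f q) \<and> (\<forall>c p. f (cscale c p) = cscale c (f p))"

lemma is_linear_lin_ext [simp]: "is_linear (lin_ext F)"
  by (simp add: is_linear_def lin_ext_add lin_ext_cscale)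

lemma is_linearD:
  assumes "is_linear f"
  shows "f (p + q) = f p + f q" "f (cscale c p) = cscale c (f p)"
  using assms by (auto simp: is_linear_def)

lemma is_linear_zero: "is_linear f \<Longrightarrow> f 0 = 0"
  using is_linearD(2)[of f 0 0] by simp

lemma is_linear_uminus: "is_linear f \<Longrightarrow> f (- p) = - f p"
  using is_linearD(2)[of f "-1" p] by (simp add: cscale_minus_one)

lemma is_linear_diff: "is_linear f \<Longrightarrow> f (p - q) = f p - f q"
  using is_linearD(1)[of f p "-q"] is_linear_uminus[of f q] by simp

lemma is_linear_sum: "is_linear f \<Longrightarrow> f (sum g A) = sum (\<lambda>x. f (g x)) A"
  by (induction A rule: infinite_finite_induct) (auto simp: is_linearD is_linear_zero)

lemma is_linear_lin_ext_comm: "is_linear f \<Longrightarrow> f (lin_ext G p) = lin_ext (\<lambda>m. f (G m)) p"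
  by (simp add: lin_ext_def is_linear_sum is_linearD)

lemma is_linear_comp: "is_linear f \<Longrightarrow> is_linear g \<Longrightarrow> is_linear (\<lambda>p. f (g p))"
  by (simp add: is_linear_def)

lemma is_linear_add: "is_linear f \<Longrightarrow> is_linear g \<Longrightarrow> is_linear (\<lambda>p. f p + g p)"
  by (simp add: is_linear_def cscale_add)

lemma is_linear_cscale: "is_linear f \<Longrightarrow> is_linear (\<lambda>p. cscale c (f p))"
  by (simp add: is_linear_def cscale_add mult.commute)

lemma is_linear_sum_fun: "(\<And>k. k \<in> A \<Longrightarrow> is_linear (f k)) \<Longrightarrow> is_linear (\<lambda>p. \<Sum>k\<in>A. f k p)"
  by (induction A rule: infinite_finite_induct)
     (auto simp: is_linear_def cscale_add cscale_sum sum.distrib)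

lemma is_linear_zero_fun: "is_linear (\<lambda>p. 0)" by (simp add: is_linear_def)
lemma is_linear_id: "is_linear (\<lambda>p. p)" by (simp add: is_linear_def)

lemma lin_ext_single_one: "lin_ext (\<lambda>m. Poly_Mapping.single m 1) p = p"
proof (rule poly_mapping_eqI)
  fix k
  have "Poly_Mapping.lookup (lin_ext (\<lambda>m. Poly_Mapping.single m 1) p) k
      = (\<Sum>m\<in>Poly_Mapping.keys p. if m = k then Poly_Mapping.lookup p m else 0)"
    by (simp add: lin_ext_def lookup_sum lookup_single when_def)
  also have "\<dots> = Poly_Mapping.lookup p k"
    by (simp add: sum.delta' in_keys_iff)
  finally show "Poly_Mapping.lookup (lin_ext (\<lambda>m. Poly_Mapping.single m 1) p) k = Poly_Mapping.lookup p k" .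
qed

lemma is_linear_eq_lin_ext: "is_linear f \<Longrightarrow> f v = lin_ext (\<lambda>m. f (Poly_Mapping.single m 1)) v"
  using is_linear_lin_ext_comm[of f "\<lambda>m. Poly_Mapping.single m 1" v] by (simp add: lin_ext_single_one)

lemma is_linear_eqI:
  assumes "is_linear f" "is_linear g"
    and "\<And>m. m \<in> Poly_Mapping.keys p \<Longrightarrow> f (Poly_Mapping.single m 1) = g (Poly_Mapping.single m 1)"
  shows "f p = g p"
proof -
  have "f p = lin_ext (\<lambda>m. f (Poly_Mapping.single m 1)) p" by (rule is_linear_eq_lin_ext[OF assms(1)])
  also have "\<dots> = lin_ext (\<lambda>m. g (Poly_Mapping.single m 1)) p" by (rule lin_ext_cong) (use assms(3) in auto)
  also have "\<dots> = g p" by (rule is_linear_eq_lin_ext[OF assms(2), symmetric])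
  finally show ?thesis .
qed

section \<open>Fock model\<close>

text \<open>A Fock monomial is a pair \<open>(E, S)\<close>: \<open>E\<close> holds the exponents of the even variables
  \<open>x(a,k)\<close>, and \<open>S\<close> is the set of odd variables present, each coded by \<open>odd_code a k\<close>; odd
  variables are written in increasing order of their codes, so multiplying or differentiating
  by the odd variable \<open>y\<close> costs the sign \<open>odd_sign y S\<close> of passing the smaller ones.\<close>

type_synonym fmono = "((sym \<times> nat) \<Rightarrow>\<^sub>0 nat) \<times> nat set"
type_synonym fock = "fmono \<Rightarrow>\<^sub>0 complex"

definition odd_sign :: "nat \<Rightarrow> nat set \<Rightarrow> complex" where
  "odd_sign y S = (-1) ^ card {z\<in>S. z < y}"

lemma card_less_insert:
  "card {z\<in>insert x S. z < (y::nat)} = card {z\<in>S. z < y} + (if x < y \<and> x \<notin> S then 1 else 0)"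
proof -
  have f: "finite {z\<in>S. z < y}" by (rule finite_subset[of _ "{..<y}"]) auto
  show ?thesis
  proof (cases "x < y \<and> x \<notin> S")
    case True
    then have "{z\<in>insert x S. z < y} = insert x {z\<in>S. z < y}" by auto
    then show ?thesis using f True by simp
  next
    case False
    then have "{z\<in>insert x S. z < y} = {z\<in>S. z < y}" by auto
    then show ?thesis using False by simp
  qed
qed

lemma odd_sign_insert: "odd_sign y (insert x S) = (if x < y \<and> x \<notin> S then - odd_sign y S else odd_sign y S)"
  unfolding odd_sign_def card_less_insert by simp

lemma odd_sign_remove: "odd_sign y (S - {x}) = (if x < y \<and> x \<in> S then - odd_sign y S else odd_sign y S)"
proof (cases "x \<in> S")
  case True
  then have "S = insert x (S - {x})" by auto
  then have "odd_sign y S = odd_sign y (insert x (S - {x}))" by simp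
  also have "\<dots> = (if x < y then - odd_sign y (S - {x}) else odd_sign y (S - {x}))"
    by (subst odd_sign_insert) simp
  finally have h: "odd_sign y S = (if x < y then - odd_sign y (S - {x}) else odd_sign y (S - {x}))" .
  show ?thesis using True h by (cases "x < y") simp_all
next
  case False
  then show ?thesis by simp
qed

lemma odd_sign_square [simp]: "odd_sign y S * odd_sign y S = 1"
  by (simp add: odd_sign_def power_mult_distrib[symmetric] power_add[symmetric] flip: power_add)

definition mult_odd :: "nat \<Rightarrow> fmono \<Rightarrow> fock" where
  "mult_odd y m = (if y \<in> snd m then 0 else Poly_Mapping.single (fst m, insert y (snd m)) (odd_sign y (snd m)))"
definition deriv_odd :: "nat \<Rightarrow> fmono \<Rightarrow> fock" where
  "deriv_odd y m = (if y \<in> snd m then Poly_Mapping.single (fst m, snd m - {y}) (odd_sign y (snd m)) else 0)"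
definition mult_even :: "sym \<times> nat \<Rightarrow> fmono \<Rightarrow> fock" where
  "mult_even x m = Poly_Mapping.single (fst m + Poly_Mapping.single x 1, snd m) 1"
definition deriv_even :: "sym \<times> nat \<Rightarrow> fmono \<Rightarrow> fock" where
  "deriv_even x m = Poly_Mapping.single (fst m - Poly_Mapping.single x 1, snd m) (of_nat (Poly_Mapping.lookup (fst m) x))"

lemma mult_odd_anticomm: "lin_ext (mult_odd y) (mult_odd z m) = - lin_ext (mult_odd z) (mult_odd y m)"
  by (cases m) (auto simp: mult_odd_def odd_sign_insert insert_commute single_uminus mult.commute)

lemma deriv_odd_anticomm: "lin_ext (deriv_odd y) (deriv_odd z m) = - lin_ext (deriv_odd z) (deriv_odd y m)"
  by (cases m) (auto simp: deriv_odd_def odd_sign_remove single_uminus mult.commute Diff_insert2[symmetric] insert_commute)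

lemma deriv_mult_odd: "lin_ext (deriv_odd y) (mult_odd z m) = (if y = z then Poly_Mapping.single m 1 else 0) - lin_ext (mult_odd z) (deriv_odd y m)"
  by (cases m) (auto simp: deriv_odd_def mult_odd_def odd_sign_remove odd_sign_insert insert_Diff_if single_uminus mult.commute insert_absorb)
lemma pm_add_single_diff: "(E::'a \<Rightarrow>\<^sub>0 nat) + Poly_Mapping.single x (Suc 0) - Poly_Mapping.single x (Suc 0) = E"
  by (rule poly_mapping_eqI) (simp add: lookup_add lookup_minus lookup_single when_def)

lemma pm_diff_single_add: "Poly_Mapping.lookup (E::'a \<Rightarrow>\<^sub>0 nat) x > 0 \<Longrightarrow> E - Poly_Mapping.single x (Suc 0) + Poly_Mapping.single x (Suc 0) = E"
  by (rule poly_mapping_eqI) (auto simp add: lookup_add lookup_minus lookup_single when_def)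

lemma pm_add_diff_single_comm: "x \<noteq> w \<Longrightarrow> (E::'a \<Rightarrow>\<^sub>0 nat) + Poly_Mapping.single w (Suc 0) - Poly_Mapping.single x (Suc 0) = E - Poly_Mapping.single x (Suc 0) + Poly_Mapping.single w (Suc 0)"
  by (rule poly_mapping_eqI) (auto simp add: lookup_add lookup_minus lookup_single when_def)

lemma pm_diff_single_comm: "(E::'a \<Rightarrow>\<^sub>0 nat) - Poly_Mapping.single w (Suc 0) - Poly_Mapping.single x (Suc 0) = E - Poly_Mapping.single x (Suc 0) - Poly_Mapping.single w (Suc 0)"
  by (rule poly_mapping_eqI) (simp add: lookup_minus)

lemma mult_even_comm: "lin_ext (mult_even x) (mult_even w m) = lin_ext (mult_even w) (mult_even x m)"
  by (simp add: mult_even_def add_ac)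

lemma deriv_even_comm: "lin_ext (deriv_even x) (deriv_even w m) = lin_ext (deriv_even w) (deriv_even x m)"
  by (auto simp: deriv_even_def pm_diff_single_comm lookup_minus lookup_single when_def mult.commute)

lemma deriv_mult_even: "lin_ext (deriv_even x) (mult_even w m) = (if x = w then Poly_Mapping.single m 1 else 0) + lin_ext (mult_even w) (deriv_even x m)"
proof (cases "x = w")
  case True
  show ?thesis
  proof (cases "Poly_Mapping.lookup (fst m) x > 0")
    case True': True
    then show ?thesis using True
      by (cases m) (simp add: mult_even_def deriv_even_def pm_add_single_diff pm_diff_single_add lookup_add single_add[symmetric])
  next
    case False
    then show ?thesis using True
      by (cases m) (simp add: mult_even_def deriv_even_def pm_add_single_diff lookup_add)
  qed
next
  case False
  then show ?thesis
    by (cases m) (simp add: mult_even_def deriv_even_def pm_add_diff_single_comm lookup_add lookup_single)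
qed

lemma mult_odd_even_comm: "lin_ext (mult_odd y) (mult_even x m) = lin_ext (mult_even x) (mult_odd y m)"
  by (simp add: mult_odd_def mult_even_def)
lemma deriv_odd_even_comm: "lin_ext (deriv_odd y) (deriv_even x m) = lin_ext (deriv_even x) (deriv_odd y m)"
  by (simp add: deriv_odd_def deriv_even_def mult.commute)
lemma deriv_odd_mult_even_comm: "lin_ext (deriv_odd y) (mult_even x m) = lin_ext (mult_even x) (deriv_odd y m)"
  by (simp add: deriv_odd_def mult_even_def)
lemma deriv_even_mult_odd_comm: "lin_ext (deriv_even x) (mult_odd y m) = lin_ext (mult_odd y) (deriv_even x m)"
  by (simp add: deriv_even_def mult_odd_def mult.commute)

definition odd_code :: "nat \<Rightarrow> nat \<Rightarrow> nat" where "odd_code a k = prod_encode (a, k)"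

lemma odd_code_eq [simp]: "odd_code a k = odd_code b l \<longleftrightarrow> a = b \<and> k = l"
  by (auto simp: odd_code_def prod_encode_eq)

fun odd_sym :: "sym \<Rightarrow> bool" where
  "odd_sym (Alpha _) = True" | "odd_sym _ = False"

definition mult_basis :: "sym \<times> nat \<Rightarrow> fmono \<Rightarrow> fock" where
  "mult_basis x = (case fst x of Alpha a \<Rightarrow> mult_odd (odd_code a (snd x)) | _ \<Rightarrow> mult_even x)"
definition deriv_basis :: "sym \<times> nat \<Rightarrow> fmono \<Rightarrow> fock" where
  "deriv_basis x = (case fst x of Alpha a \<Rightarrow> deriv_odd (odd_code a (snd x)) | _ \<Rightarrow> deriv_even x)"

definition mult_var :: "sym \<times> nat \<Rightarrow> fock \<Rightarrow> fock" where "mult_var x = lin_ext (mult_basis x)"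
definition deriv_var :: "sym \<times> nat \<Rightarrow> fock \<Rightarrow> fock" where "deriv_var x = lin_ext (deriv_basis x)"

definition var_sign :: "sym \<Rightarrow> sym \<Rightarrow> complex" where
  "var_sign a b = (if odd_sym a \<and> odd_sym b then -1 else 1)"

lemma is_linear_mult_var [simp]: "is_linear (mult_var x)" by (simp add: mult_var_def)
lemma is_linear_deriv_var [simp]: "is_linear (deriv_var x)" by (simp add: deriv_var_def)

lemma mult_basis_supercomm: "lin_ext (mult_basis x) (mult_basis y m) = cscale (var_sign (fst x) (fst y)) (lin_ext (mult_basis y) (mult_basis x m))"
  apply (cases x; cases y)
  subgoal for s k t l
    apply (cases s; cases t)
    apply (simp_all add: mult_basis_def var_sign_def cscale_minus_one lin_ext_uminus)
    apply (rule mult_odd_anticomm mult_even_comm mult_odd_even_comm mult_odd_even_comm[symmetric])+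
    done
  done

lemma deriv_basis_supercomm: "lin_ext (deriv_basis x) (deriv_basis y m) = cscale (var_sign (fst x) (fst y)) (lin_ext (deriv_basis y) (deriv_basis x m))"
  apply (cases x; cases y)
  subgoal for s k t l
    apply (cases s; cases t)
    apply (simp_all add: deriv_basis_def var_sign_def cscale_minus_one lin_ext_uminus)
    apply (rule deriv_odd_anticomm deriv_even_comm deriv_odd_even_comm deriv_odd_even_comm[symmetric])+
    done
  done

lemma deriv_mult_basis: "lin_ext (deriv_basis x) (mult_basis y m) = (if x = y then Poly_Mapping.single m 1 else 0) + cscale (var_sign (fst x) (fst y)) (lin_ext (mult_basis y) (deriv_basis x m))"
  apply (cases x; cases y)
  subgoal for s k t l
    by (cases s; cases t) (simp_all add: mult_basis_def deriv_basis_def var_sign_def deriv_mult_odd deriv_mult_even deriv_odd_mult_even_comm deriv_even_mult_odd_comm cscale_minus_one lin_ext_uminus)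
  done

lemma mult_var_supercomm: "mult_var x (mult_var y v) = cscale (var_sign (fst x) (fst y)) (mult_var y (mult_var x v))"
proof (rule is_linear_eqI[of _ _ v])
  show "is_linear (\<lambda>v. mult_var x (mult_var y v))" by (rule is_linear_comp) simp_all
  show "is_linear (\<lambda>v. cscale (var_sign (fst x) (fst y)) (mult_var y (mult_var x v)))"
    by (rule is_linear_cscale, rule is_linear_comp) simp_all
qed (simp only: mult_var_def lin_ext_single cscale_1, rule mult_basis_supercomm)

lemma deriv_var_supercomm: "deriv_var x (deriv_var y v) = cscale (var_sign (fst x) (fst y)) (deriv_var y (deriv_var x v))"
proof (rule is_linear_eqI[of _ _ v])
  show "is_linear (\<lambda>v. deriv_var x (deriv_var y v))" by (rule is_linear_comp) simp_all
  show "is_linear (\<lambda>v. cscale (var_sign (fst x) (fst y)) (deriv_var y (deriv_var x v)))"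
    by (rule is_linear_cscale, rule is_linear_comp) simp_all
qed (simp only: deriv_var_def lin_ext_single cscale_1, rule deriv_basis_supercomm)

lemma deriv_mult_var: "deriv_var x (mult_var y v) = (if x = y then v else 0) + cscale (var_sign (fst x) (fst y)) (mult_var y (deriv_var x v))"
proof (rule is_linear_eqI[of _ _ v])
  show "is_linear (\<lambda>v. deriv_var x (mult_var y v))" by (rule is_linear_comp) simp_all
  have l: "is_linear (\<lambda>v. cscale (var_sign (fst x) (fst y)) (mult_var y (deriv_var x v)))"
    by (rule is_linear_cscale, rule is_linear_comp) simp_all
  show "is_linear (\<lambda>v. (if x = y then v else 0) + cscale (var_sign (fst x) (fst y)) (mult_var y (deriv_var x v)))"
  proof (cases "x = y")
    case True then show ?thesis using is_linear_add[OF is_linear_id l] by simp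
  next
    case False then show ?thesis using is_linear_add[OF is_linear_zero_fun l] by simp
  qed
qed (simp only: mult_var_def deriv_var_def lin_ext_single cscale_1, rule deriv_mult_basis)

definition polar :: "nat \<Rightarrow> sym \<Rightarrow> sym \<Rightarrow> fock \<Rightarrow> fock" where
  "polar n a b v = (\<Sum>k\<in>{1..n}. mult_var (a, k) (deriv_var (b, k) v))"

text \<open>The multiplicative part of \<open>\<rho>\<^sub>i\<^sub>j = D\<^sup>l\<^sub>i\<^sub>j + (i|j)\<close>: on proper variables, \<open>x(a,j)\<close> plays
  the role of \<open>(a|j)\<close>.\<close>

definition mult_part :: "nat \<Rightarrow> sym \<Rightarrow> sym \<Rightarrow> fock \<Rightarrow> fock" where
  "mult_part n a b v = (case b of Prop j \<Rightarrow> if j \<in> {1..n} then mult_var (a, j) v else 0 | _ \<Rightarrow> 0)"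

definition rep :: "nat \<Rightarrow> sym \<Rightarrow> sym \<Rightarrow> fock \<Rightarrow> fock" where
  "rep n a b v = polar n a b v + mult_part n a b v"

lemma is_linear_polar [simp]: "is_linear (polar n a b)"
  unfolding polar_def
  by (rule is_linear_sum_fun, rule is_linear_comp) simp_all

lemma is_linear_mult_part [simp]: "is_linear (mult_part n a b)"
proof (cases b)
  case (Prop j)
  then show ?thesis unfolding mult_part_def
    by (cases "j \<in> {1..n}") (simp_all add: is_linear_zero_fun del: atLeastAtMost_iff)
qed (simp_all add: mult_part_def[abs_def] is_linear_zero_fun)

lemma is_linear_rep [simp]: "is_linear (rep n a b)"
  unfolding rep_def[abs_def] by (rule is_linear_add) simp_all

lemma sgn_var_sign: "var_sign b c * (var_sign a c * var_sign b d) = sgn a b c d * var_sign d a"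
  by (cases a; cases b; cases c; cases d) (simp_all add: var_sign_def sgn_def)

lemma sgn_square: "sgn a b c d * sgn a b c d = 1"
  by (simp add: sgn_def flip: power_add)

lemma sgn_swap: "sgn c d a b = sgn a b c d"
  by (simp add: sgn_def mult.commute)

lemma is_linear_if_zero: "is_linear f \<Longrightarrow> f (if P then Y else 0) = (if P then f Y else 0)"
  by (simp add: is_linear_zero)

lemma polar_term_normal_form:
  "mult_var (a,k) (deriv_var (b,k) (mult_var (c,l) (deriv_var (d,l) v))) =
     (if b = c \<and> k = l then mult_var (a,k) (deriv_var (d,l) v) else 0) +
     cscale (var_sign b c * (var_sign a c * var_sign b d)) (mult_var (c,l) (mult_var (a,k) (deriv_var (d,l) (deriv_var (b,k) v))))"
proof -
  have g3: "deriv_var (b,k) (mult_var (c,l) X) = (if b = c \<and> k = l then X else 0) + cscale (var_sign b c) (mult_var (c,l) (deriv_var (b,k) X))" for X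
    using deriv_mult_var[of "(b,k)" "(c,l)" X] by simp
  have g2: "deriv_var (b,k) (deriv_var (d,l) v) = cscale (var_sign b d) (deriv_var (d,l) (deriv_var (b,k) v))"
    using deriv_var_supercomm[of "(b,k)" "(d,l)" v] by simp
  have g1: "mult_var (a,k) (mult_var (c,l) Z) = cscale (var_sign a c) (mult_var (c,l) (mult_var (a,k) Z))" for Z
    using mult_var_supercomm[of "(a,k)" "(c,l)" Z] by simp
  show ?thesis
    by (simp add: g3 g2 g1 is_linearD[OF is_linear_mult_var] is_linear_if_zero mult_ac)
qed

lemma polar_term_normal_form_swapped:
  "mult_var (c,l) (deriv_var (d,l) (mult_var (a,k) (deriv_var (b,k) v))) =
     (if d = a \<and> l = k then mult_var (c,l) (deriv_var (b,k) v) else 0) +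
     cscale (var_sign d a) (mult_var (c,l) (mult_var (a,k) (deriv_var (d,l) (deriv_var (b,k) v))))"
proof -
  have g3: "deriv_var (d,l) (mult_var (a,k) X) = (if d = a \<and> l = k then X else 0) + cscale (var_sign d a) (mult_var (a,k) (deriv_var (d,l) X))" for X
    using deriv_mult_var[of "(d,l)" "(a,k)" X] by simp
  show ?thesis
    by (simp add: g3 is_linearD[OF is_linear_mult_var] is_linear_if_zero)
qed

lemma polar_term_bracket:
  "mult_var (a,k) (deriv_var (b,k) (mult_var (c,l) (deriv_var (d,l) v))) - cscale (sgn a b c d) (mult_var (c,l) (deriv_var (d,l) (mult_var (a,k) (deriv_var (b,k) v))))
   = (if b = c \<and> k = l then mult_var (a,k) (deriv_var (d,l) v) else 0) - cscale (sgn a b c d) (if d = a \<and> l = k then mult_var (c,l) (deriv_var (b,k) v) else 0)"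
  unfolding polar_term_normal_form[of a k b c l d v] polar_term_normal_form_swapped[of c l d a k b v] sgn_var_sign by (simp add: cscale_add cscale_diff)

lemma polar_polar_bracket: "polar n a b (polar n c d v) - cscale (sgn a b c d) (polar n c d (polar n a b v))
   = (if b = c then polar n a d v else 0) - cscale (sgn a b c d) (if d = a then polar n c b v else 0)"
proof -
  let ?s = "sgn a b c d"
  have e1: "polar n a b (polar n c d v) = (\<Sum>k\<in>{1..n}. \<Sum>l\<in>{1..n}. mult_var (a,k) (deriv_var (b,k) (mult_var (c,l) (deriv_var (d,l) v))))"
    by (simp add: polar_def is_linear_sum[OF is_linear_mult_var] is_linear_sum[OF is_linear_deriv_var])
  have e2: "polar n c d (polar n a b v) = (\<Sum>k\<in>{1..n}. \<Sum>l\<in>{1..n}. mult_var (c,l) (deriv_var (d,l) (mult_var (a,k) (deriv_var (b,k) v))))"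
    by (simp add: polar_def is_linear_sum[OF is_linear_mult_var] is_linear_sum[OF is_linear_deriv_var]) (rule sum.swap)
  have "polar n a b (polar n c d v) - cscale ?s (polar n c d (polar n a b v))
     = (\<Sum>k\<in>{1..n}. \<Sum>l\<in>{1..n}. mult_var (a,k) (deriv_var (b,k) (mult_var (c,l) (deriv_var (d,l) v))) - cscale ?s (mult_var (c,l) (deriv_var (d,l) (mult_var (a,k) (deriv_var (b,k) v)))))"
    by (simp add: e1 e2 cscale_sum sum_subtractf)
  also have "\<dots> = (\<Sum>k\<in>{1..n}. \<Sum>l\<in>{1..n}. (if b = c \<and> k = l then mult_var (a,k) (deriv_var (d,l) v) else 0) - cscale ?s (if d = a \<and> l = k then mult_var (c,l) (deriv_var (b,k) v) else 0))"
    by (simp only: polar_term_bracket)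
  also have "\<dots> = (if b = c then polar n a d v else 0) - cscale ?s (if d = a then polar n c b v else 0)"
    by (simp add: sum_subtractf polar_def cscale_sum is_linear_if_zero if_distrib[of "cscale ?s"] sum.If_cases)
  finally show ?thesis .
qed

lemma sgn_Prop: "sgn a b c (Prop j) = var_sign b c * var_sign a c"
  by (cases a; cases b; cases c) (simp_all add: var_sign_def sgn_def)

lemma sgn_Prop_Prop: "sgn a (Prop j) c (Prop l) = var_sign a c"
  by (cases a; cases c) (simp_all add: var_sign_def sgn_def)

lemma polar_mult_part_bracket: "polar n a b (mult_part n c d v) - cscale (sgn a b c d) (mult_part n c d (polar n a b v)) = (if b = c then mult_part n a d v else 0)"
proof (cases "\<exists>j. d = Prop j \<and> j \<in> {1..n}")
  case True
  then obtain j where d: "d = Prop j" and j: "j \<in> {1..n}" by blast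
  have pt: "mult_var (a,k) (deriv_var (b,k) (mult_var (c,j) v)) = (if b = c \<and> k = j then mult_var (a,k) v else 0) + cscale (var_sign b c * var_sign a c) (mult_var (c,j) (mult_var (a,k) (deriv_var (b,k) v)))" for k
  proof -
    have g3: "deriv_var (b,k) (mult_var (c,j) v) = (if b = c \<and> k = j then v else 0) + cscale (var_sign b c) (mult_var (c,j) (deriv_var (b,k) v))"
      using deriv_mult_var[of "(b,k)" "(c,j)" v] by simp
    have g1: "mult_var (a,k) (mult_var (c,j) Z) = cscale (var_sign a c) (mult_var (c,j) (mult_var (a,k) Z))" for Z
      using mult_var_supercomm[of "(a,k)" "(c,j)" Z] by simp
    show ?thesis by (simp add: g3 g1 is_linearD[OF is_linear_mult_var] is_linear_if_zero mult_ac)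
  qed
  have "polar n a b (mult_var (c,j) v) = (\<Sum>k\<in>{1..n}. (if b = c \<and> k = j then mult_var (a,k) v else 0) + cscale (var_sign b c * var_sign a c) (mult_var (c,j) (mult_var (a,k) (deriv_var (b,k) v))))"
    by (simp add: polar_def pt)
  also have "\<dots> = (\<Sum>k\<in>{1..n}. (if b = c \<and> k = j then mult_var (a,k) v else 0)) + (\<Sum>k\<in>{1..n}. cscale (var_sign b c * var_sign a c) (mult_var (c,j) (mult_var (a,k) (deriv_var (b,k) v))))"
    by (rule sum.distrib)
  also have "(\<Sum>k\<in>{1..n}. (if b = c \<and> k = j then mult_var (a,k) v else 0)) = (if b = c then mult_var (a,j) v else 0)"
    using j by (cases "b = c") (simp_all add: sum.delta del: atLeastAtMost_iff)
  also have "(\<Sum>k\<in>{1..n}. cscale (var_sign b c * var_sign a c) (mult_var (c,j) (mult_var (a,k) (deriv_var (b,k) v)))) = cscale (var_sign b c * var_sign a c) (mult_var (c,j) (polar n a b v))"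
    by (simp only: polar_def is_linear_sum[OF is_linear_mult_var] cscale_sum)
  finally show ?thesis using j d by (simp add: mult_part_def sgn_Prop del: atLeastAtMost_iff)
next
  case False
  then have "mult_part n c d = (\<lambda>v. 0)" "mult_part n a d = (\<lambda>v. 0)"
    by (cases d; auto simp: mult_part_def[abs_def])+
  then show ?thesis by (simp add: is_linear_zero)
qed

lemma mult_part_mult_part_bracket: "mult_part n a b (mult_part n c d v) - cscale (sgn a b c d) (mult_part n c d (mult_part n a b v)) = 0"
proof (cases "(\<exists>j. b = Prop j \<and> j \<in> {1..n}) \<and> (\<exists>l. d = Prop l \<and> l \<in> {1..n})")
  case True
  then obtain j l where b: "b = Prop j" "j \<in> {1..n}" and d: "d = Prop l" "l \<in> {1..n}" by blast
  have "mult_var (a,j) (mult_var (c,l) v) = cscale (var_sign a c) (mult_var (c,l) (mult_var (a,j) v))"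
    using mult_var_supercomm[of "(a,j)" "(c,l)" v] by simp
  then show ?thesis using b d by (simp add: mult_part_def sgn_Prop_Prop del: atLeastAtMost_iff)
next
  case False
  then have "mult_part n a b = (\<lambda>v. 0) \<or> mult_part n c d = (\<lambda>v. 0)"
    by (cases b; cases d; auto simp: mult_part_def[abs_def])
  then show ?thesis by (auto simp: is_linear_zero)
qed

lemma mult_part_polar_bracket: "mult_part n a b (polar n c d v) - cscale (sgn a b c d) (polar n c d (mult_part n a b v)) = - cscale (sgn a b c d) (if a = d then mult_part n c b v else 0)"
proof -
  let ?s = "sgn a b c d"
  have h: "polar n c d (mult_part n a b v) - cscale ?s (mult_part n a b (polar n c d v)) = (if d = a then mult_part n c b v else 0)"
    using polar_mult_part_bracket[of n c d a b v] by (simp add: sgn_swap)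
  have "mult_part n a b (polar n c d v) - cscale ?s (polar n c d (mult_part n a b v)) = - cscale ?s (polar n c d (mult_part n a b v) - cscale ?s (mult_part n a b (polar n c d v)))"
    by (simp add: cscale_diff sgn_square)
  also have "\<dots> = - cscale ?s (if a = d then mult_part n c b v else 0)"
    by (simp only: h eq_commute[of d a])
  finally show ?thesis .
qed

lemma bracket_of_sums: "(A + B + (C + D)) - cscale s (A' + B' + (C' + D')) = (A - cscale s A') + (B - cscale s C') + (C - cscale s B') + (D - cscale s (D'::fock))"
  by (simp add: cscale_add algebra_simps)

lemma rep_bracket: "rep n a b (rep n c d v) - cscale (sgn a b c d) (rep n c d (rep n a b v))
   = (if b = c then rep n a d v else 0) - cscale (sgn a b c d) (if a = d then rep n c b v else 0)"
proof -
  let ?s = "sgn a b c d"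
  have "rep n a b (rep n c d v) - cscale ?s (rep n c d (rep n a b v)) =
     (polar n a b (polar n c d v) - cscale ?s (polar n c d (polar n a b v))) +
     (polar n a b (mult_part n c d v) - cscale ?s (mult_part n c d (polar n a b v))) +
     (mult_part n a b (polar n c d v) - cscale ?s (polar n c d (mult_part n a b v))) +
     (mult_part n a b (mult_part n c d v) - cscale ?s (mult_part n c d (mult_part n a b v)))"
    unfolding rep_def is_linearD(1)[OF is_linear_polar] is_linearD(1)[OF is_linear_mult_part] by (rule bracket_of_sums)
  also have "\<dots> = (if b = c then rep n a d v else 0) - cscale ?s (if a = d then rep n c b v else 0)"
    unfolding polar_polar_bracket polar_mult_part_bracket mult_part_polar_bracket mult_part_mult_part_bracket by (cases "b = c"; cases "a = d") (simp_all add: rep_def cscale_add cscale_uminus eq_commute[of d a])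
  finally show ?thesis .
qed

definition rep_word :: "nat \<Rightarrow> letter list \<Rightarrow> fock \<Rightarrow> fock" where
  "rep_word n w v = foldr (\<lambda>l q. rep n (fst l) (snd l) q) w v"

lemma rep_word_Nil [simp]: "rep_word n [] v = v" by (simp add: rep_word_def)
lemma rep_word_Cons [simp]: "rep_word n (l # w) v = rep n (fst l) (snd l) (rep_word n w v)" by (simp add: rep_word_def)
lemma rep_word_append: "rep_word n (u @ w) v = rep_word n u (rep_word n w v)" by (simp add: rep_word_def)

lemma is_linear_rep_word [simp]: "is_linear (rep_word n w)"
proof (induction w)
  case Nil then show ?case by (simp add: is_linear_id[unfolded rep_word_Nil[symmetric]] rep_word_def[abs_def] is_linear_def)
next
  case (Cons l w)
  have "is_linear (\<lambda>v. rep n (fst l) (snd l) (rep_word n w v))" by (rule is_linear_comp) (simp_all add: Cons)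
  then show ?case by (simp add: rep_word_Cons[abs_def])
qed

definition act :: "nat \<Rightarrow> fa \<Rightarrow> fock \<Rightarrow> fock" where
  "act n x v = lin_ext (\<lambda>w. rep_word n w v) x"

lemma is_linear_act [simp]: "is_linear (act n x)"
proof -
  have "is_linear (\<lambda>v. \<Sum>w\<in>Poly_Mapping.keys x. cscale (Poly_Mapping.lookup x w) (rep_word n w v))"
    by (rule is_linear_sum_fun, rule is_linear_cscale) simp
  then show ?thesis by (simp add: act_def[abs_def] lin_ext_def)
qed

lemma act_add: "act n (x + y) v = act n x v + act n y v" by (simp add: act_def lin_ext_add)
lemma act_diff: "act n (x - y) v = act n x v - act n y v" by (simp add: act_def lin_ext_diff)
lemma act_zero [simp]: "act n 0 v = 0" by (simp add: act_def)
lemma act_single [simp]: "act n (Poly_Mapping.single w c) v = cscale c (rep_word n w v)" by (simp add: act_def)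

lemma act_fmul: "act n (fmul x y) v = act n x (act n y v)"
proof -
  have "act n (fmul x y) v = (\<Sum>u\<in>Poly_Mapping.keys x. \<Sum>w\<in>Poly_Mapping.keys y.
      cscale (Poly_Mapping.lookup x u * Poly_Mapping.lookup y w) (rep_word n u (rep_word n w v)))"
    by (simp add: fmul_def act_def lin_ext_sum rep_word_append)
  also have "\<dots> = act n x (act n y v)"
    by (simp add: act_def lin_ext_def is_linear_sum[OF is_linear_rep_word] is_linearD[OF is_linear_rep_word] cscale_sum)
  finally show ?thesis .
qed

lemma act_e [simp]: "act n (e a b) v = rep n a b v" by (simp add: e_def)
lemma act_fscal [simp]: "act n (fscal c) v = cscale c v" by (simp add: fscal_def)

lemma act_rel: "act n (rel a b c d) v = 0"
proof -
  have i1: "act n (if b = c then e a d else 0) v = (if b = c then rep n a d v else 0)" by simp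
  have i2: "act n (if a = d then e c b else 0) v = (if a = d then rep n c b v else 0)" by simp
  show ?thesis
    unfolding rel_def act_diff act_fmul act_e act_fscal i1 i2 sgn_def[symmetric]
    using rep_bracket[of n a b c d v] by simp
qed

lemma act_Jid: "x \<in> Jid n \<Longrightarrow> act n x v = 0"
proof (induction x arbitrary: v rule: Jid.induct)
  case (gen a b c d) show ?case by (rule act_rel)
next
  case zero then show ?case by simp
next
  case (add x y) then show ?case by (simp add: act_add)
next
  case (mult x u w) then show ?case by (simp add: act_fmul is_linear_zero)
qed

section \<open>Degree in a virtual symbol\<close>

definition even_degree :: "sym \<Rightarrow> ((sym \<times> nat) \<Rightarrow>\<^sub>0 nat) \<Rightarrow> nat" where
  "even_degree g E = (\<Sum>k\<in>{k. Poly_Mapping.lookup E (g, k) \<noteq> 0}. Poly_Mapping.lookup E (g, k))"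

lemma finite_even_degree_support: "finite {k. Poly_Mapping.lookup E (g, k) \<noteq> 0}"
proof -
  have "{k. Poly_Mapping.lookup E (g, k) \<noteq> 0} \<subseteq> snd ` Poly_Mapping.keys E"
    by (force simp: in_keys_iff image_iff)
  then show ?thesis by (rule finite_subset) simp
qed

lemma even_degree_superset: "finite K \<Longrightarrow> {k. Poly_Mapping.lookup E (g, k) \<noteq> 0} \<subseteq> K \<Longrightarrow>
   even_degree g E = (\<Sum>k\<in>K. Poly_Mapping.lookup E (g, k))"
  unfolding even_degree_def by (rule sum.mono_neutral_left) auto

lemma even_degree_add_single: "even_degree g (E + Poly_Mapping.single x 1) = even_degree g E + (if fst x = g then 1 else 0)"
proof -
  obtain h k0 where x: "x = (h, k0)" by (cases x)
  let ?K = "insert k0 {k. Poly_Mapping.lookup E (g, k) \<noteq> 0}"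
  have fK: "finite ?K" by (rule finite.insertI[OF finite_even_degree_support])
  have "even_degree g (E + Poly_Mapping.single x 1) = (\<Sum>k\<in>?K. Poly_Mapping.lookup E (g, k) + (if h = g \<and> k0 = k then Suc 0 else 0))"
    by (rule trans[OF even_degree_superset[OF fK]]) (auto simp: lookup_add lookup_single when_def x One_nat_def)
  also have "\<dots> = (\<Sum>k\<in>?K. Poly_Mapping.lookup E (g, k)) + (\<Sum>k\<in>?K. (if h = g \<and> k0 = k then Suc 0 else 0))"
    by (rule sum.distrib)
  also have "(\<Sum>k\<in>?K. Poly_Mapping.lookup E (g, k)) = even_degree g E"
    by (rule even_degree_superset[symmetric, OF fK]) auto
  also have "(\<Sum>k\<in>?K. (if h = g \<and> k0 = k then Suc 0 else 0::nat)) = (if fst x = g then 1 else 0)"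
    using fK by (cases "h = g") (simp_all add: x sum.delta)
  finally show ?thesis .
qed

lemma even_degree_diff_single: "Poly_Mapping.lookup E x > 0 \<Longrightarrow> even_degree g (E - Poly_Mapping.single x 1) + (if fst x = g then 1 else 0) = even_degree g E"
  using even_degree_add_single[of g "E - Poly_Mapping.single x 1" x] pm_diff_single_add[of E x] by simp

definition odd_degree :: "nat \<Rightarrow> nat set \<Rightarrow> nat" where
  "odd_degree a S = card {k. odd_code a k \<in> S}"

lemma finite_odd_degree_support: "finite S \<Longrightarrow> finite {k. odd_code a k \<in> S}"
proof -
  assume f: "finite S"
  have "inj_on (odd_code a) {k. odd_code a k \<in> S}" by (auto simp: inj_on_def)
  moreover have "odd_code a ` {k. odd_code a k \<in> S} \<subseteq> S" by auto
  ultimately show ?thesis using f by (meson finite_imageD finite_subset)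
qed

lemma odd_degree_insert: "finite S \<Longrightarrow> odd_code b k \<notin> S \<Longrightarrow> odd_degree a (insert (odd_code b k) S) = odd_degree a S + (if a = b then 1 else 0)"
proof -
  assume f: "finite S" and n: "odd_code b k \<notin> S"
  show ?thesis
  proof (cases "a = b")
    case True
    then have "{k'. odd_code a k' \<in> insert (odd_code b k) S} = insert k {k'. odd_code a k' \<in> S}" by auto
    then show ?thesis using True n finite_odd_degree_support[OF f, of a] by (simp add: odd_degree_def)
  next
    case False
    then have "{k'. odd_code a k' \<in> insert (odd_code b k) S} = {k'. odd_code a k' \<in> S}" by auto
    then show ?thesis using False by (simp add: odd_degree_def)
  qed
qed

lemma odd_degree_remove: "finite S \<Longrightarrow> odd_code b k \<in> S \<Longrightarrow> odd_degree a (S - {odd_code b k}) + (if a = b then 1 else 0) = odd_degree a S"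
proof -
  assume f: "finite S" and n: "odd_code b k \<in> S"
  have "S = insert (odd_code b k) (S - {odd_code b k})" using n by auto
  then have "odd_degree a S = odd_degree a (insert (odd_code b k) (S - {odd_code b k}))" by simp
  also have "\<dots> = odd_degree a (S - {odd_code b k}) + (if a = b then 1 else 0)"
    by (rule odd_degree_insert) (use f in auto)
  finally show ?thesis by simp
qed

definition degree :: "sym \<Rightarrow> fmono \<Rightarrow> nat" where
  "degree g m = even_degree g (fst m) + (case g of Alpha a \<Rightarrow> odd_degree a (snd m) | _ \<Rightarrow> 0)"

text \<open>Finiteness of the odd part is carried along because \<open>odd_degree\<close> counts with \<open>card\<close>.\<close>

definition homogeneous :: "sym \<Rightarrow> int \<Rightarrow> fock \<Rightarrow> bool" where
  "homogeneous g d v \<longleftrightarrow> (\<forall>m\<in>Poly_Mapping.keys v. finite (snd m) \<and> int (degree g m) = d)"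

lemma homogeneous_lin_ext:
  assumes "homogeneous g d v" "\<And>m. finite (snd m) \<Longrightarrow> int (degree g m) = d \<Longrightarrow> homogeneous g d' (F m)"
  shows "homogeneous g d' (lin_ext F v)"
  using assms keys_lin_ext[of F v] unfolding homogeneous_def by blast

lemma homogeneous_add: "homogeneous g d v \<Longrightarrow> homogeneous g d w \<Longrightarrow> homogeneous g d (v + w)"
  using keys_add[of v w] unfolding homogeneous_def by blast

lemma homogeneous_zero [simp]: "homogeneous g d 0" by (simp add: homogeneous_def)

lemma homogeneous_sum: "(\<And>k. k \<in> K \<Longrightarrow> homogeneous g d (f k)) \<Longrightarrow> homogeneous g d (sum f K)"
  by (induction K rule: infinite_finite_induct) (auto intro: homogeneous_add)

lemma homogeneous_single: "finite (snd m) \<Longrightarrow> int (degree g m) = d \<Longrightarrow> homogeneous g d (Poly_Mapping.single m c)"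
  by (simp add: homogeneous_def)

lemma homogeneous_negative: "homogeneous g d v \<Longrightarrow> d < 0 \<Longrightarrow> v = 0"
  unfolding homogeneous_def by (metis keys_eq_empty equals0I of_nat_less_0_iff)

lemma degree_insert_odd: "finite S \<Longrightarrow> odd_code a k \<notin> S \<Longrightarrow> int (degree g (E, insert (odd_code a k) S)) = int (degree g (E, S)) + (if Alpha a = g then 1 else 0)"
  by (cases g) (simp_all add: degree_def odd_degree_insert)

lemma degree_remove_odd: "finite S \<Longrightarrow> odd_code a k \<in> S \<Longrightarrow> int (degree g (E, S - {odd_code a k})) = int (degree g (E, S)) - (if Alpha a = g then 1 else 0)"
proof (cases g)
  case (Alpha a')
  assume f: "finite S" and y: "odd_code a k \<in> S"
  have "odd_degree a' (S - {odd_code a k}) + (if a' = a then 1 else 0) = odd_degree a' S" by (rule odd_degree_remove[OF f y])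
  then show ?thesis using Alpha by (auto simp: degree_def)
qed (simp_all add: degree_def)

lemma degree_add_even: "int (degree g (E + Poly_Mapping.single x 1, S)) = int (degree g (E, S)) + (if fst x = g then 1 else 0)"
  using even_degree_add_single[of g E x] by (cases g) (simp_all add: degree_def)

lemma degree_diff_even: "Poly_Mapping.lookup E x > 0 \<Longrightarrow> int (degree g (E - Poly_Mapping.single x 1, S)) = int (degree g (E, S)) - (if fst x = g then 1 else 0)"
  using even_degree_diff_single[of E x g] by (cases g) (auto simp: degree_def)

lemma mult_basis_even: "\<not> odd_sym (fst x) \<Longrightarrow> mult_basis x = mult_even x"
  by (cases "fst x") (simp_all add: mult_basis_def)

lemma deriv_basis_even: "\<not> odd_sym (fst x) \<Longrightarrow> deriv_basis x = deriv_even x"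
  by (cases "fst x") (simp_all add: deriv_basis_def)

lemma homogeneous_mult_var: "homogeneous g d v \<Longrightarrow> homogeneous g (d + (if fst x = g then 1 else 0)) (mult_var x v)"
  unfolding mult_var_def
proof (rule homogeneous_lin_ext)
  fix m assume f: "finite (snd m)" and dm: "int (degree g m) = d"
  obtain E S where m: "m = (E, S)" by (cases m)
  obtain h k where x: "x = (h, k)" by (cases x)
  show "homogeneous g (d + (if fst x = g then 1 else 0)) (mult_basis x m)"
  proof (cases "odd_sym h")
    case False
    then show ?thesis using f dm degree_add_even[of g E x S]
      by (simp add: mult_basis_even mult_even_def homogeneous_single x m)
  next
    case True
    then obtain a where h: "h = Alpha a" by (cases h) auto
    show ?thesis
      using f dm degree_insert_odd[of S a k g E]
      by (simp add: mult_basis_def mult_odd_def homogeneous_single x m h)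
  qed
qed

lemma homogeneous_deriv_var: "homogeneous g d v \<Longrightarrow> homogeneous g (d - (if fst x = g then 1 else 0)) (deriv_var x v)"
  unfolding deriv_var_def
proof (rule homogeneous_lin_ext)
  fix m assume f: "finite (snd m)" and dm: "int (degree g m) = d"
  obtain E S where m: "m = (E, S)" by (cases m)
  obtain h k where x: "x = (h, k)" by (cases x)
  show "homogeneous g (d - (if fst x = g then 1 else 0)) (deriv_basis x m)"
  proof (cases "odd_sym h")
    case False
    then have "deriv_basis x m
        = Poly_Mapping.single (E - Poly_Mapping.single x 1, S) (of_nat (Poly_Mapping.lookup E x))"
      by (simp add: deriv_basis_even deriv_even_def x m)
    then show ?thesis using f dm degree_diff_even[of E x g S]
      by (cases "Poly_Mapping.lookup E x > 0") (simp_all add: homogeneous_single m)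
  next
    case True
    then obtain a where h: "h = Alpha a" by (cases h) auto
    show ?thesis
      using f dm degree_remove_odd[of S a k g E]
      by (simp add: deriv_basis_def deriv_odd_def homogeneous_single x m h)
  qed
qed

lemma lookup_le_even_degree: "Poly_Mapping.lookup E (g, k) \<le> even_degree g E"
proof (cases "Poly_Mapping.lookup E (g, k) = 0")
  case False
  then show ?thesis unfolding even_degree_def
    by (intro member_le_sum[where f = "\<lambda>k. Poly_Mapping.lookup E (g, k)"]) (use finite_even_degree_support[of E g] in auto)
qed simp

lemma deriv_var_degree_zero: "homogeneous g 0 v \<Longrightarrow> fst x = g \<Longrightarrow> deriv_var x v = 0"
  unfolding deriv_var_def
proof (rule lin_ext_zero_fun)
  fix m assume I: "homogeneous g 0 v" and xg: "fst x = g" and mk: "m \<in> Poly_Mapping.keys v"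
  then have f: "finite (snd m)" and d0: "degree g m = 0" by (auto simp: homogeneous_def)
  obtain E S where m: "m = (E, S)" by (cases m)
  obtain h k where x: "x = (h, k)" by (cases x)
  have cE: "even_degree g E = 0" using d0 m by (simp add: degree_def)
  show "deriv_basis x m = 0"
  proof (cases "odd_sym h")
    case False
    have "Poly_Mapping.lookup E x = 0" using lookup_le_even_degree[of E g k] cE x xg by simp
    then show ?thesis using False by (simp add: deriv_basis_even deriv_even_def x m)
  next
    case True
    then obtain a where h: "h = Alpha a" by (cases h) auto
    have "g = Alpha a" using xg x h by simp
    then have "odd_degree a S = 0" using d0 m by (simp add: degree_def)
    then have "odd_code a k \<notin> S"
      using finite_odd_degree_support[of S a] f m by (auto simp: odd_degree_def)
    then show ?thesis by (simp add: deriv_basis_def deriv_odd_def x m h)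
  qed
qed

lemma homogeneous_rep:
  assumes g: "virtual g" and I: "homogeneous g d v"
  shows "homogeneous g (d + (if a = g then 1 else 0) - (if b = g then 1 else 0)) (rep n a b v)"
proof -
  let ?d = "d + (if a = g then 1 else 0) - (if b = g then 1 else 0)"
  have D: "homogeneous g ?d (polar n a b v)"
    unfolding polar_def
  proof (rule homogeneous_sum)
    fix k
    have "homogeneous g (d - (if b = g then 1 else 0)) (deriv_var (b, k) v)" using homogeneous_deriv_var[OF I, of "(b,k)"] by simp
    from homogeneous_mult_var[OF this, of "(a,k)"] show "homogeneous g ?d (mult_var (a, k) (deriv_var (b, k) v))"
      by (simp add: algebra_simps)
  qed
  have M: "homogeneous g ?d (mult_part n a b v)"
  proof (cases b)
    case (Prop j)
    then have "b \<noteq> g" using g by auto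
    then show ?thesis using homogeneous_mult_var[OF I, of "(a,j)"] Prop by (simp add: mult_part_def)
  qed (simp_all add: mult_part_def)
  show ?thesis unfolding rep_def by (rule homogeneous_add[OF D M])
qed

lemma rep_degree_zero:
  assumes g: "virtual g" and I: "homogeneous g 0 v" and b: "b = g"
  shows "rep n a b v = 0"
proof -
  have "polar n a b v = 0" unfolding polar_def using deriv_var_degree_zero[OF I, of "(b,_)"] b by (simp add: is_linear_zero)
  moreover have "mult_part n a b v = 0" using g unfolding b by (cases g) (simp_all add: mult_part_def)
  ultimately show ?thesis by (simp add: rep_def)
qed

lemma rep_fold_zero: "fold (\<lambda>l q. rep n (fst l) (snd l) q) r 0 = 0"
  by (induction r) (simp_all add: is_linear_zero)

lemma rep_fold_negative_degree:
  "homogeneous g d v \<Longrightarrow> virtual g \<Longrightarrow> i < length r \<Longrightarrow>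
   int (length (filter (\<lambda>l. snd l = g) (take (Suc i) r))) > d + int (length (filter (\<lambda>l. fst l = g) (take i r))) \<Longrightarrow>
   fold (\<lambda>l q. rep n (fst l) (snd l) q) r v = 0"
proof (induction r arbitrary: i d v)
  case Nil then show ?case by simp
next
  case (Cons l r)
  obtain a b where l: "l = (a, b)" by (cases l)
  let ?d' = "d + (if a = g then 1 else 0) - (if b = g then 1 else 0)"
  have I': "homogeneous g ?d' (rep n a b v)" by (rule homogeneous_rep[OF Cons.prems(2,1)])
  show ?case
  proof (cases i)
    case 0
    have "rep n a b v = 0"
    proof (cases "d < 0")
      case True
      then show ?thesis using homogeneous_negative[OF Cons.prems(1)] by (simp add: is_linear_zero)
    next
      case False
      then have "b = g" "d = 0" using Cons.prems(4) 0 l by (auto split: if_splits)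
      then show ?thesis using rep_degree_zero[OF Cons.prems(2)] Cons.prems(1) by simp
    qed
    then show ?thesis using l by (simp add: rep_fold_zero)
  next
    case (Suc i')
    have "fold (\<lambda>l q. rep n (fst l) (snd l) q) r (rep n a b v) = 0"
      by (rule Cons.IH[OF I' Cons.prems(2), of i']) (use Cons.prems(3,4) Suc l in auto)
    then show ?thesis using l by simp
  qed
qed

definition vacuum :: fock where "vacuum = Poly_Mapping.single (0, {}) 1"

lemma homogeneous_vacuum: "homogeneous g 0 vacuum"
  by (simp add: vacuum_def homogeneous_def degree_def even_degree_def odd_degree_def split: sym.splits)

lemma rep_word_irregular_vacuum: "irregular w \<Longrightarrow> rep_word n w vacuum = 0"
proof -
  assume "irregular w"
  then obtain i g where i: "i < length (rev w)" and g: "virtual g"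
    and c: "length (filter (\<lambda>l. snd l = g) (take (Suc i) (rev w))) > length (filter (\<lambda>l. fst l = g) (take i (rev w)))"
    by (auto simp: irregular_def Let_def)
  have "fold (\<lambda>l q. rep n (fst l) (snd l) q) (rev w) vacuum = 0"
    by (rule rep_fold_negative_degree[OF homogeneous_vacuum g i]) (use c in simp)
  then show ?thesis by (simp add: rep_word_def foldr_conv_fold)
qed

lemma act_Irr_vacuum: "x \<in> Irr n \<Longrightarrow> act n x vacuum = 0"
proof (induction x rule: Irr.induct)
  case (rels x) then show ?case by (rule act_Jid)
next
  case (gen w u) then show ?case by (simp add: act_fmul rep_word_irregular_vacuum is_linear_zero)
next
  case zero then show ?case by simp
next
  case (add x y) then show ?case by (simp add: act_add)
qed

definition prop_key :: "nat \<times> nat \<Rightarrow> sym \<times> nat" where "prop_key x = (Prop (fst x), snd x)"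

lemma inj_prop_key: "inj prop_key" by (auto simp: inj_def prop_key_def)

lemma lookup_map_key_prop_key: "Poly_Mapping.lookup (Poly_Mapping.map_key prop_key E) x = Poly_Mapping.lookup E (prop_key x)"
  using inj_prop_key by (simp add: Poly_Mapping.map_key.rep_eq)

lemma map_key_prop_key_single: "Poly_Mapping.map_key prop_key (Poly_Mapping.single (Prop i, k) c) = Poly_Mapping.single (i, k) c"
  using map_key_single[OF inj_prop_key, of "(i,k)" c] by (simp add: prop_key_def)

lemma map_key_prop_key_add: "Poly_Mapping.map_key prop_key (E + F) = Poly_Mapping.map_key prop_key E + Poly_Mapping.map_key prop_key F"
  by (rule poly_mapping_eqI) (simp add: lookup_map_key_prop_key lookup_add)

lemma map_key_prop_key_diff: "Poly_Mapping.map_key prop_key ((E::(sym\<times>nat)\<Rightarrow>\<^sub>0nat) - F) = Poly_Mapping.map_key prop_key E - Poly_Mapping.map_key prop_key F"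
  by (rule poly_mapping_eqI) (simp add: lookup_map_key_prop_key lookup_minus)

text \<open>Reads \<open>x(Prop i, k)\<close> as \<open>(i|k)\<close> and forgets all other variables, which is harmless only
  on proper states.\<close>

definition evaluate_mono :: "fmono \<Rightarrow> cpoly" where
  "evaluate_mono m = Poly_Mapping.single (Poly_Mapping.map_key prop_key (fst m)) 1"

definition evaluate :: "fock \<Rightarrow> cpoly" where "evaluate = lin_ext evaluate_mono"

lemma is_linear_evaluate [simp]: "is_linear evaluate" by (simp add: evaluate_def)

definition proper_mono :: "fmono \<Rightarrow> bool" where
  "proper_mono m \<longleftrightarrow> snd m = {} \<and> (\<forall>x\<in>Poly_Mapping.keys (fst m). \<exists>i k. x = (Prop i, k))"

definition proper_state :: "fock \<Rightarrow> bool" where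
  "proper_state v \<longleftrightarrow> (\<forall>m\<in>Poly_Mapping.keys v. proper_mono m)"

definition Dl_mono :: "nat \<Rightarrow> nat \<Rightarrow> nat \<Rightarrow> ((nat \<times> nat) \<Rightarrow>\<^sub>0 nat) \<Rightarrow> cpoly" where
  "Dl_mono n i j m = (\<Sum>k\<in>{1..n}. Poly_Mapping.single (m - Poly_Mapping.single (j, k) 1 + Poly_Mapping.single (i, k) 1)
        (of_nat (Poly_Mapping.lookup m (j, k))))"

lemma Dl_eq_lin_ext: "Dl n i j p = lin_ext (Dl_mono n i j) p"
  by (simp add: Dl_def lin_ext_def Dl_mono_def cscale_sum)

lemma var_mult_eq_lin_ext: "var i j * p = lin_ext (\<lambda>m. Poly_Mapping.single (Poly_Mapping.single (i, j) 1 + m) 1) p"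
proof -
  have "var i j * p = var i j * lin_ext (\<lambda>m. Poly_Mapping.single m 1) p" by (simp add: lin_ext_single_one)
  also have "\<dots> = lin_ext (\<lambda>m. Poly_Mapping.single (Poly_Mapping.single (i, j) 1 + m) 1) p"
    by (simp add: lin_ext_def sum_distrib_left var_def mult_single)
  finally show ?thesis .
qed

lemma is_linear_rho [simp]: "is_linear (rho n i j)"
proof -
  have "rho n i j = (\<lambda>p. lin_ext (Dl_mono n i j) p + lin_ext (\<lambda>m. Poly_Mapping.single (Poly_Mapping.single (i, j) 1 + m) 1) p)"
    by (simp add: rho_def[abs_def] Dl_eq_lin_ext var_mult_eq_lin_ext)
  then show ?thesis by (simp add: is_linear_add)
qed

lemma proper_state_add: "proper_state v \<Longrightarrow> proper_state w \<Longrightarrow> proper_state (v + w)"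
  using keys_add[of v w] unfolding proper_state_def by blast
lemma proper_state_zero [simp]: "proper_state 0" by (simp add: proper_state_def)
lemma proper_state_sum: "(\<And>k. k \<in> K \<Longrightarrow> proper_state (f k)) \<Longrightarrow> proper_state (sum f K)"
  by (induction K rule: infinite_finite_induct) (auto intro: proper_state_add)
lemma proper_state_single: "proper_mono m \<Longrightarrow> proper_state (Poly_Mapping.single m c)"
  by (simp add: proper_state_def)
lemma proper_state_lin_ext: "(\<And>m. m \<in> Poly_Mapping.keys v \<Longrightarrow> proper_state (F m)) \<Longrightarrow> proper_state (lin_ext F v)"
  using keys_lin_ext[of F v] unfolding proper_state_def by blast

lemma rep_Prop_single:
  assumes m: "m = (E, {})" and j: "j \<in> {1..n}"
  shows "rep n (Prop i) (Prop j) (Poly_Mapping.single m 1) =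
     (\<Sum>k\<in>{1..n}. Poly_Mapping.single (E - Poly_Mapping.single (Prop j, k) 1 + Poly_Mapping.single (Prop i, k) 1, {})
        (of_nat (Poly_Mapping.lookup E (Prop j, k)))) +
     Poly_Mapping.single (E + Poly_Mapping.single (Prop i, j) 1, {}) 1"
  using j by (simp add: rep_def polar_def mult_part_def mult_var_def deriv_var_def mult_basis_def deriv_basis_def mult_even_def deriv_even_def m
      del: atLeastAtMost_iff)

lemma proper_mono_diff_add: "proper_mono (E, {}) \<Longrightarrow> proper_mono (E - Poly_Mapping.single (Prop j, k) 1 + Poly_Mapping.single (Prop i, k') 1, {})"
  unfolding proper_mono_def
proof (clarsimp)
  fix a b assume h: "\<forall>x\<in>Poly_Mapping.keys E. \<exists>i k. x = (Prop i, k)"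
    and ab: "(a, b) \<in> Poly_Mapping.keys (E - Poly_Mapping.single (Prop j, k) (Suc 0) + Poly_Mapping.single (Prop i, k') (Suc 0))"
  then have "(a, b) \<in> Poly_Mapping.keys E \<or> (a, b) = (Prop i, k')"
    by (auto simp: in_keys_iff lookup_add lookup_minus lookup_single when_def split: if_splits)
  then show "\<exists>i. a = Prop i" using h by auto
qed

lemma proper_mono_add: "proper_mono (E, {}) \<Longrightarrow> proper_mono (E + Poly_Mapping.single (Prop i, k') 1, {})"
  unfolding proper_mono_def
proof (clarsimp)
  fix a b assume h: "\<forall>x\<in>Poly_Mapping.keys E. \<exists>i k. x = (Prop i, k)"
    and ab: "(a, b) \<in> Poly_Mapping.keys (E + Poly_Mapping.single (Prop i, k') (Suc 0))"
  then have "(a, b) \<in> Poly_Mapping.keys E \<or> (a, b) = (Prop i, k')"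
    by (auto simp: in_keys_iff lookup_add lookup_single when_def split: if_splits)
  then show "\<exists>i. a = Prop i" using h by auto
qed

lemma rep_Prop_proper_state:
  assumes P: "proper_state v" and j: "j \<in> {1..n}"
  shows "proper_state (rep n (Prop i) (Prop j) v) \<and> evaluate (rep n (Prop i) (Prop j) v) = rho n i j (evaluate v)"
proof
  have e: "rep n (Prop i) (Prop j) v = lin_ext (\<lambda>m. rep n (Prop i) (Prop j) (Poly_Mapping.single m 1)) v"
    by (rule is_linear_eq_lin_ext) simp
  show "proper_state (rep n (Prop i) (Prop j) v)"
    unfolding e
  proof (rule proper_state_lin_ext)
    fix m assume "m \<in> Poly_Mapping.keys v"
    then have pm: "proper_mono m" using P by (simp add: proper_state_def)
    then obtain E where m: "m = (E, {})" by (cases m) (auto simp: proper_mono_def)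
    show "proper_state (rep n (Prop i) (Prop j) (Poly_Mapping.single m 1))"
      unfolding rep_Prop_single[OF m j]
      using pm m by (intro proper_state_add proper_state_sum proper_state_single proper_mono_diff_add proper_mono_add) auto
  qed
  show "evaluate (rep n (Prop i) (Prop j) v) = rho n i j (evaluate v)"
  proof (rule is_linear_eqI[of "\<lambda>v. evaluate (rep n (Prop i) (Prop j) v)" "\<lambda>v. rho n i j (evaluate v)"])
    show "is_linear (\<lambda>v. evaluate (rep n (Prop i) (Prop j) v))" by (rule is_linear_comp) simp_all
    show "is_linear (\<lambda>v. rho n i j (evaluate v))" by (rule is_linear_comp) simp_all
  next
    fix m assume "m \<in> Poly_Mapping.keys v"
    then have pm: "proper_mono m" using P by (simp add: proper_state_def)
    then obtain E where m: "m = (E, {})" by (cases m) (auto simp: proper_mono_def)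
    show "evaluate (rep n (Prop i) (Prop j) (Poly_Mapping.single m 1)) = rho n i j (evaluate (Poly_Mapping.single m 1))"
      unfolding rep_Prop_single[OF m j]
      by (simp add: evaluate_def evaluate_mono_def m rho_def Dl_eq_lin_ext var_mult_eq_lin_ext Dl_mono_def lin_ext_sum lin_ext_add
          map_key_prop_key_diff map_key_prop_key_add map_key_prop_key_single lookup_map_key_prop_key prop_key_def var_def add.commute mult_single
          del: atLeastAtMost_iff)
  qed
qed

lemma map_key_prop_key_zero: "Poly_Mapping.map_key prop_key 0 = 0"
  by (rule poly_mapping_eqI) (simp add: lookup_map_key_prop_key)

lemma proper_state_vacuum: "proper_state vacuum" by (simp add: proper_state_def vacuum_def proper_mono_def)
lemma evaluate_vacuum: "evaluate vacuum = 1" by (simp add: evaluate_def evaluate_mono_def vacuum_def map_key_prop_key_zero)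

lemma rep_word_proper: "proper_word n w \<Longrightarrow> proper_state (rep_word n w vacuum) \<and> evaluate (rep_word n w vacuum) = rho_word n w 1"
proof (induction w)
  case Nil then show ?case by (simp add: proper_state_vacuum evaluate_vacuum rho_word_def)
next
  case (Cons l w)
  then obtain i j where l: "l = (Prop i, Prop j)" and ij: "i \<in> {1..n}" "j \<in> {1..n}"
    and pw: "proper_word n w"
    by (auto simp: proper_word_def)
  from Cons.IH[OF pw] have IH: "proper_state (rep_word n w vacuum)" "evaluate (rep_word n w vacuum) = rho_word n w 1" by auto
  show ?case using rep_Prop_proper_state[OF IH(1) ij(2), of i] IH(2) l
    by (simp add: rho_word_def)
qed

lemma const_mult: "const c * p = cscale c p"
  by (simp add: const_def cscale_def mult_map_scale_conv_mult)

lemma koszul_eq_evaluate_act: "proper n x \<Longrightarrow> koszul n x = evaluate (act n x vacuum)"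
proof -
  assume p: "proper n x"
  have "evaluate (act n x vacuum) = lin_ext (\<lambda>w. evaluate (rep_word n w vacuum)) x"
    unfolding act_def by (rule is_linear_lin_ext_comm) simp
  also have "\<dots> = lin_ext (\<lambda>w. rho_word n w 1) x"
    by (rule lin_ext_cong) (use p rep_word_proper in \<open>auto simp: proper_def\<close>)
  also have "\<dots> = koszul n x"
    by (simp add: lin_ext_def koszul_def const_mult)
  finally show ?thesis by simp
qed

section \<open>The Capelli word\<close>

definition no_proper_vars :: "fock \<Rightarrow> bool" where
  "no_proper_vars v \<longleftrightarrow> (\<forall>m\<in>Poly_Mapping.keys v. \<forall>i k. Poly_Mapping.lookup (fst m) (Prop i, k) = 0)"

lemma no_proper_vars_vacuum: "no_proper_vars vacuum" by (simp add: no_proper_vars_def vacuum_def)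

lemma no_proper_vars_mult_Alpha: "no_proper_vars v \<Longrightarrow> no_proper_vars (mult_var (Alpha a, k) v)"
  unfolding mult_var_def no_proper_vars_def
  using keys_lin_ext[of "mult_basis (Alpha a, k)" v]
  by (fastforce simp: mult_basis_def mult_odd_def split: if_splits)

lemma deriv_Prop_no_proper_vars: "no_proper_vars v \<Longrightarrow> deriv_var (Prop j, k) v = 0"
  unfolding deriv_var_def
  by (rule lin_ext_zero_fun) (auto simp: no_proper_vars_def deriv_basis_def deriv_even_def)

fun create :: "(nat \<Rightarrow> nat) \<Rightarrow> (nat \<Rightarrow> nat) \<Rightarrow> nat list \<Rightarrow> fock \<Rightarrow> fock" where
  "create \<alpha> j [] v = v"
| "create \<alpha> j (t # ts) v = mult_var (Alpha (\<alpha> t), j t) (create \<alpha> j ts v)"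

lemma no_proper_vars_create: "no_proper_vars v \<Longrightarrow> no_proper_vars (create \<alpha> j ts v)"
  by (induction ts) (simp_all add: no_proper_vars_mult_Alpha)

lemma rep_word_creations:
  assumes "no_proper_vars v" "\<forall>t\<in>set ts. j t \<in> {1..n}"
  shows "rep_word n (map (\<lambda>t. (Alpha (\<alpha> t), Prop (j t))) ts) v = create \<alpha> j ts v"
  using assms
proof (induction ts)
  case Nil then show ?case by simp
next
  case (Cons t ts)
  then have IH: "rep_word n (map (\<lambda>t. (Alpha (\<alpha> t), Prop (j t))) ts) v = create \<alpha> j ts v" by simp
  have np: "no_proper_vars (create \<alpha> j ts v)" by (rule no_proper_vars_create[OF Cons.prems(1)])
  have jt: "j t \<in> {1..n}" using Cons.prems(2) by simp
  show ?case
    using jt by (simp add: IH rep_def polar_def mult_part_def deriv_Prop_no_proper_vars[OF np] is_linear_zero[OF is_linear_mult_var] del: atLeastAtMost_iff)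
qed

definition annihilate :: "nat \<Rightarrow> nat \<Rightarrow> nat \<Rightarrow> fock \<Rightarrow> fock" where
  "annihilate n i a v = (\<Sum>k\<in>{1..n}. mult_var (Prop i, k) (deriv_var (Alpha a, k) v))"

lemma rep_Prop_Alpha: "rep n (Prop i) (Alpha a) v = annihilate n i a v"
  by (simp add: rep_def polar_def mult_part_def annihilate_def)

lemma annihilate_mult_Alpha:
  assumes jb: "jb \<in> {1..n}"
  shows "annihilate n i a (mult_var (Alpha b, jb) v) = (if a = b then mult_var (Prop i, jb) v else 0) - mult_var (Alpha b, jb) (annihilate n i a v)"
proof -
  have pt: "mult_var (Prop i, k) (deriv_var (Alpha a, k) (mult_var (Alpha b, jb) v)) =
      (if a = b \<and> k = jb then mult_var (Prop i, k) v else 0) - mult_var (Alpha b, jb) (mult_var (Prop i, k) (deriv_var (Alpha a, k) v))" for k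
  proof -
    have g3: "deriv_var (Alpha a, k) (mult_var (Alpha b, jb) v) = (if a = b \<and> k = jb then v else 0) - mult_var (Alpha b, jb) (deriv_var (Alpha a, k) v)"
      using deriv_mult_var[of "(Alpha a, k)" "(Alpha b, jb)" v] by (simp add: var_sign_def cscale_minus_one)
    have g1: "mult_var (Prop i, k) (mult_var (Alpha b, jb) Z) = mult_var (Alpha b, jb) (mult_var (Prop i, k) Z)" for Z
      using mult_var_supercomm[of "(Prop i, k)" "(Alpha b, jb)" Z] by (simp add: var_sign_def)
    show ?thesis by (simp add: g3 g1 is_linear_diff[OF is_linear_mult_var] is_linear_if_zero)
  qed
  have "annihilate n i a (mult_var (Alpha b, jb) v) = (\<Sum>k\<in>{1..n}. (if a = b \<and> k = jb then mult_var (Prop i, k) v else 0)) - (\<Sum>k\<in>{1..n}. mult_var (Alpha b, jb) (mult_var (Prop i, k) (deriv_var (Alpha a, k) v)))"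
    by (simp add: annihilate_def pt sum_subtractf)
  also have "(\<Sum>k\<in>{1..n}. (if a = b \<and> k = jb then mult_var (Prop i, k) v else 0)) = (if a = b then mult_var (Prop i, jb) v else 0)"
    using jb by (cases "a = b") (simp_all add: sum.delta del: atLeastAtMost_iff)
  also have "(\<Sum>k\<in>{1..n}. mult_var (Alpha b, jb) (mult_var (Prop i, k) (deriv_var (Alpha a, k) v))) = mult_var (Alpha b, jb) (annihilate n i a v)"
    by (simp only: annihilate_def is_linear_sum[OF is_linear_mult_var])
  finally show ?thesis .
qed

lemma annihilate_mult_Prop: "annihilate n i a (mult_var (Prop i', j') v) = mult_var (Prop i', j') (annihilate n i a v)"
proof -
  have pt: "mult_var (Prop i, k) (deriv_var (Alpha a, k) (mult_var (Prop i', j') v)) = mult_var (Prop i', j') (mult_var (Prop i, k) (deriv_var (Alpha a, k) v))" for k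
  proof -
    have g3: "deriv_var (Alpha a, k) (mult_var (Prop i', j') v) = mult_var (Prop i', j') (deriv_var (Alpha a, k) v)"
      using deriv_mult_var[of "(Alpha a, k)" "(Prop i', j')" v] by (simp add: var_sign_def)
    have g1: "mult_var (Prop i, k) (mult_var (Prop i', j') Z) = mult_var (Prop i', j') (mult_var (Prop i, k) Z)" for Z
      using mult_var_supercomm[of "(Prop i, k)" "(Prop i', j')" Z] by (simp add: var_sign_def)
    show ?thesis by (simp add: g3 g1)
  qed
  show ?thesis by (simp add: annihilate_def pt is_linear_sum[OF is_linear_mult_var])
qed

lemma annihilate_vacuum: "annihilate n i a vacuum = 0"
proof -
  have "deriv_var (Alpha a, k) vacuum = 0" for k
    by (simp add: deriv_var_def deriv_basis_def deriv_odd_def vacuum_def)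
  then show ?thesis by (simp add: annihilate_def is_linear_zero)
qed

lemma annihilate_create:
  assumes "\<forall>s\<in>set ts. \<alpha> s \<noteq> a \<and> j s \<in> {1..n}"
  shows "annihilate n i a (create \<alpha> j ts v) = cscale ((-1) ^ length ts) (create \<alpha> j ts (annihilate n i a v))"
  using assms
proof (induction ts)
  case Nil then show ?case by simp
next
  case (Cons s ts)
  then have IH: "annihilate n i a (create \<alpha> j ts v) = cscale ((-1) ^ length ts) (create \<alpha> j ts (annihilate n i a v))"
    and ne: "\<alpha> s \<noteq> a" and js: "j s \<in> {1..n}" by auto
  show ?case
    using ne by (simp add: annihilate_mult_Alpha[OF js] IH is_linearD[OF is_linear_mult_var] cscale_minus_one[symmetric])
qed

lemma create_mult_Prop: "create \<alpha> j ts (mult_var (Prop i', j') v) = mult_var (Prop i', j') (create \<alpha> j ts v)"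
proof (induction ts)
  case Nil then show ?case by simp
next
  case (Cons t ts)
  have g1: "mult_var (Alpha (\<alpha> t), j t) (mult_var (Prop i', j') Z) = mult_var (Prop i', j') (mult_var (Alpha (\<alpha> t), j t) Z)" for Z
    using mult_var_supercomm[of "(Alpha (\<alpha> t), j t)" "(Prop i', j')" Z] by (simp add: var_sign_def)
  show ?case by (simp add: Cons g1)
qed

lemma create_append: "create \<alpha> j (ts @ us) v = create \<alpha> j ts (create \<alpha> j us v)"
  by (induction ts) simp_all

lemma rep_word_annihilations_mult_Prop: "rep_word n (map (\<lambda>t. (Prop (i t), Alpha (\<alpha> t))) ts) (mult_var (Prop i', j') v) = mult_var (Prop i', j') (rep_word n (map (\<lambda>t. (Prop (i t), Alpha (\<alpha> t))) ts) v)"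
  by (induction ts) (simp_all add: rep_Prop_Alpha annihilate_mult_Prop)

fun proper_product :: "(nat \<Rightarrow> nat) \<Rightarrow> (nat \<Rightarrow> nat) \<Rightarrow> nat \<Rightarrow> fock" where
  "proper_product i j 0 = vacuum"
| "proper_product i j (Suc h) = mult_var (Prop (i (Suc h)), j (Suc h)) (proper_product i j h)"

lemma choose_two_Suc: "(Suc h choose 2) = h + (h choose 2)"
  by (simp add: numeral_2_eq_2)

lemma rep_word_annihilations_create:
  assumes "\<forall>t\<in>{1..h}. i t \<in> {1..n} \<and> j t \<in> {1..n}" and "inj_on \<alpha> {1..h}"
  shows "rep_word n (map (\<lambda>t. (Prop (i t), Alpha (\<alpha> t))) [1..<h+1]) (create \<alpha> j [1..<h+1] vacuum) = cscale ((-1) ^ (h choose 2)) (proper_product i j h)"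
  using assms
proof (induction h)
  case 0 then show ?case by (simp add: numeral_2_eq_2)
next
  case (Suc h)
  let ?ts = "[1..<h+1]"
  let ?A = "map (\<lambda>t. (Prop (i t), Alpha (\<alpha> t))) ?ts"
  have IH: "rep_word n ?A (create \<alpha> j ?ts vacuum) = cscale ((-1) ^ (h choose 2)) (proper_product i j h)"
    by (rule Suc.IH) (use Suc.prems in \<open>auto simp: inj_on_def\<close>)
  have up: "[1..<Suc h + 1] = ?ts @ [Suc h]" by simp
  have jh: "j (Suc h) \<in> {1..n}" using Suc.prems(1) by simp
  have ne: "\<forall>s\<in>set ?ts. \<alpha> s \<noteq> \<alpha> (Suc h) \<and> j s \<in> {1..n}"
  proof
    fix s assume s: "s \<in> set ?ts"
    then have "s \<in> {1..Suc h}" "Suc h \<in> {1..Suc h}" "s \<noteq> Suc h" by auto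
    then show "\<alpha> s \<noteq> \<alpha> (Suc h) \<and> j s \<in> {1..n}"
      using Suc.prems by (auto simp: inj_on_def)
  qed
  let ?m = "mult_var (Prop (i (Suc h)), j (Suc h))"
  have a1: "annihilate n (i (Suc h)) (\<alpha> (Suc h)) (mult_var (Alpha (\<alpha> (Suc h)), j (Suc h)) vacuum) = ?m vacuum"
    by (simp add: annihilate_mult_Alpha[OF jh] annihilate_vacuum is_linear_zero)
  \<comment> \<open>The new annihilation passes the \<open>h\<close> older odd factors, then consumes its own one.\<close>
  have "rep_word n (map (\<lambda>t. (Prop (i t), Alpha (\<alpha> t))) [1..<Suc h + 1]) (create \<alpha> j [1..<Suc h + 1] vacuum)
      = rep_word n ?A (annihilate n (i (Suc h)) (\<alpha> (Suc h)) (create \<alpha> j ?ts (mult_var (Alpha (\<alpha> (Suc h)), j (Suc h)) vacuum)))"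
    unfolding up by (simp del: upt_Suc add: rep_word_append create_append rep_Prop_Alpha)
  also have "\<dots> = rep_word n ?A (cscale ((-1) ^ h) (create \<alpha> j ?ts (?m vacuum)))"
    by (simp only: annihilate_create[OF ne] a1 length_upt) simp
  also have "\<dots> = cscale ((-1) ^ h) (?m (rep_word n ?A (create \<alpha> j ?ts vacuum)))"
    by (simp del: upt_Suc add: is_linearD[OF is_linear_rep_word] create_mult_Prop rep_word_annihilations_mult_Prop)
  also have "\<dots> = cscale ((-1) ^ (Suc h choose 2)) (proper_product i j (Suc h))"
    using IH by (simp del: upt_Suc add: is_linearD[OF is_linear_mult_var] choose_two_Suc power_add)
  finally show ?case .
qed

lemma rep_word_capelli_word:
  assumes rng: "\<forall>t\<in>{1..h}. i t \<in> {1..n} \<and> j t \<in> {1..n}" and "inj_on \<alpha> {1..h}"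
  shows "rep_word n (capelli_word h i j \<alpha>) vacuum = cscale ((-1) ^ (h choose 2)) (proper_product i j h)"
proof -
  have "\<forall>t\<in>set [1..<h+1]. j t \<in> {1..n}" using rng by (simp del: upt_Suc)
  then have "rep_word n (capelli_word h i j \<alpha>) vacuum
      = rep_word n (map (\<lambda>t. (Prop (i t), Alpha (\<alpha> t))) [1..<h+1]) (create \<alpha> j [1..<h+1] vacuum)"
    by (simp del: upt_Suc add: capelli_word_def rep_word_append rep_word_creations no_proper_vars_vacuum)
  also have "\<dots> = cscale ((-1) ^ (h choose 2)) (proper_product i j h)"
    by (rule rep_word_annihilations_create[OF assms])
  finally show ?thesis .
qed

lemma mult_Prop_proper_state:
  assumes P: "proper_state v"
  shows "proper_state (mult_var (Prop i, j) v) \<and> evaluate (mult_var (Prop i, j) v) = var i j * evaluate v"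
proof
  have e: "mult_var (Prop i, j) v = lin_ext (\<lambda>m. mult_var (Prop i, j) (Poly_Mapping.single m 1)) v"
    by (rule is_linear_eq_lin_ext) simp
  show "proper_state (mult_var (Prop i, j) v)"
    unfolding e
  proof (rule proper_state_lin_ext)
    fix m assume "m \<in> Poly_Mapping.keys v"
    then have pm: "proper_mono m" using P by (simp add: proper_state_def)
    then obtain E where m: "m = (E, {})" by (cases m) (auto simp: proper_mono_def)
    show "proper_state (mult_var (Prop i, j) (Poly_Mapping.single m 1))"
      using pm m proper_mono_add[of E i j] by (simp add: mult_var_def mult_basis_def mult_even_def proper_state_single)
  qed
  show "evaluate (mult_var (Prop i, j) v) = var i j * evaluate v"
  proof (rule is_linear_eqI[of "\<lambda>v. evaluate (mult_var (Prop i, j) v)" "\<lambda>v. var i j * evaluate v"])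
    show "is_linear (\<lambda>v. evaluate (mult_var (Prop i, j) v))" by (rule is_linear_comp) simp_all
    have "is_linear (\<lambda>p. var i j * p)" by (simp add: is_linear_def var_mult_eq_lin_ext lin_ext_add lin_ext_cscale)
    then show "is_linear (\<lambda>v. var i j * evaluate v)" by (rule is_linear_comp) simp
  next
    fix m assume "m \<in> Poly_Mapping.keys v"
    then have pm: "proper_mono m" using P by (simp add: proper_state_def)
    then obtain E where m: "m = (E, {})" by (cases m) (auto simp: proper_mono_def)
    show "evaluate (mult_var (Prop i, j) (Poly_Mapping.single m 1)) = var i j * evaluate (Poly_Mapping.single m 1)"
      by (simp add: evaluate_def evaluate_mono_def m mult_var_def mult_basis_def mult_even_def map_key_prop_key_add map_key_prop_key_single var_def mult_single add.commute)
  qed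
qed

lemma proper_product_evaluate: "proper_state (proper_product i j h) \<and> evaluate (proper_product i j h) = (\<Prod>t\<in>{1..h}. var (i t) (j t))"
proof (induction h)
  case 0 then show ?case by (simp add: proper_state_vacuum evaluate_vacuum)
next
  case (Suc h)
  then show ?case using mult_Prop_proper_state[of "proper_product i j h" "i (Suc h)" "j (Suc h)"]
    by (simp add: prod.cl_ivl_Suc mult.commute)
qed

section \<open>Existence of the projection\<close>

lemma fmul_single_left: "fmul (Poly_Mapping.single A 1) y = lin_ext (\<lambda>v. Poly_Mapping.single (A @ v) 1) y"
  by (simp add: fmul_def lin_ext_def)

lemma fmul_single_right: "fmul y (Poly_Mapping.single B 1) = lin_ext (\<lambda>u. Poly_Mapping.single (u @ B) 1) y"
  by (simp add: fmul_def lin_ext_def)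

lemma fmul_single_single: "fmul (Poly_Mapping.single u a) (Poly_Mapping.single v b) = Poly_Mapping.single (u @ v) (a * b)"
  by (simp add: fmul_def)

lemma fmul_fscal_left: "fmul (fscal c) y = cscale c y"
proof -
  have "fmul (fscal c) y = (\<Sum>v\<in>Poly_Mapping.keys y. Poly_Mapping.single v (c * Poly_Mapping.lookup y v))"
    by (cases "c = 0") (simp_all add: fmul_def fscal_def)
  also have "\<dots> = cscale c (lin_ext (\<lambda>m. Poly_Mapping.single m 1) y)"
    by (simp add: lin_ext_def cscale_sum)
  finally show ?thesis by (simp add: lin_ext_single_one)
qed

lemma fmul_fscal_right: "fmul y (fscal 1) = y"
proof -
  have "fmul y (fscal 1) = lin_ext (\<lambda>m. Poly_Mapping.single m 1) y"
    by (simp add: fmul_def fscal_def lin_ext_def)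
  then show ?thesis by (simp add: lin_ext_single_one)
qed

lemma fmul_cscale_left: "fmul (cscale c u) y = cscale c (fmul u y)"
proof -
  have k: "Poly_Mapping.keys (cscale c u) \<subseteq> Poly_Mapping.keys u" by (auto simp: in_keys_iff)
  have "fmul (cscale c u) y = (\<Sum>a\<in>Poly_Mapping.keys u. \<Sum>v\<in>Poly_Mapping.keys y. Poly_Mapping.single (a @ v) (Poly_Mapping.lookup (cscale c u) a * Poly_Mapping.lookup y v))"
    unfolding fmul_def by (rule sum.mono_neutral_left) (use k in \<open>auto simp: in_keys_iff\<close>)
  then show ?thesis by (simp add: fmul_def cscale_sum mult.assoc)
qed

lemma valid_el_single: "valid_word n w \<Longrightarrow> valid_el n (Poly_Mapping.single w c)"
  by (simp add: valid_el_def)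

lemma valid_el_fscal: "valid_el n (fscal c)"
  by (simp add: valid_el_def fscal_def valid_word_def)

lemma valid_el_cscale: "valid_el n u \<Longrightarrow> valid_el n (cscale c u)"
  by (auto simp: valid_el_def in_keys_iff)

lemma Jid_cscale: "x \<in> Jid n \<Longrightarrow> cscale c x \<in> Jid n"
  using Jid.mult[of x n "fscal c" "fscal 1"] valid_el_fscal
  by (simp add: fmul_fscal_left fmul_fscal_right)

lemma Irr_cscale: "x \<in> Irr n \<Longrightarrow> cscale c x \<in> Irr n"
proof (induction x rule: Irr.induct)
  case (rels x) then show ?case by (simp add: Jid_cscale Irr.rels)
next
  case (gen w u)
  then show ?case using Irr.gen[of n w "cscale c u"] by (simp add: fmul_cscale_left valid_el_cscale)
next
  case zero then show ?case by (simp add: Irr.zero)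
next
  case (add x y) then show ?case by (simp add: cscale_add Irr.add)
qed

lemma Irr_diff: "x \<in> Irr n \<Longrightarrow> y \<in> Irr n \<Longrightarrow> x - y \<in> Irr n"
  using Irr.add[of x n "cscale (-1) y"] Irr_cscale[of y n "-1"] by (simp add: cscale_minus_one)

lemma Irr_irregular: "valid_word n w \<Longrightarrow> irregular w \<Longrightarrow> Poly_Mapping.single w 1 \<in> Irr n"
  using Irr.gen[of n w "fscal 1"] valid_el_fscal by (simp add: fscal_def fmul_single_single)

lemma proper_add: "proper n x \<Longrightarrow> proper n y \<Longrightarrow> proper n (x + y)"
  using keys_add[of x y] unfolding proper_def by blast
lemma proper_cscale: "proper n x \<Longrightarrow> proper n (cscale c x)"
  by (auto simp: proper_def in_keys_iff)
lemma proper_zero: "proper n 0" by (simp add: proper_def)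
lemma proper_diff: "proper n x \<Longrightarrow> proper n y \<Longrightarrow> proper n (x - y)"
  using proper_add[of n x "cscale (-1) y"] proper_cscale[of n y "-1"] by (simp add: cscale_minus_one)
lemma proper_single: "proper_word n w \<Longrightarrow> proper n (Poly_Mapping.single w c)"
  by (simp add: proper_def)

lemma rel_eq_singles: "rel a b c d = Poly_Mapping.single [(a,b),(c,d)] 1 - Poly_Mapping.single [(c,d),(a,b)] (sgn a b c d)
   - ((if b = c then Poly_Mapping.single [(a,d)] 1 else 0) - (if a = d then Poly_Mapping.single [(c,b)] (sgn a b c d) else 0))"
  by (simp add: rel_def e_def fmul_single_single fmul_fscal_left)

lemma fmul_single_rel_single:
  "fmul (Poly_Mapping.single A 1) (fmul (rel a b c d) (Poly_Mapping.single B 1))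
     = Poly_Mapping.single (A @ [(a,b),(c,d)] @ B) 1
       - cscale (sgn a b c d) (Poly_Mapping.single (A @ [(c,d),(a,b)] @ B) 1)
       - ((if b = c then Poly_Mapping.single (A @ [(a,d)] @ B) 1 else 0)
          - cscale (sgn a b c d) (if a = d then Poly_Mapping.single (A @ [(c,b)] @ B) 1 else 0))"
  by (simp add: fmul_single_left fmul_single_right rel_eq_singles lin_ext_diff
      is_linear_if_zero[OF is_linear_lin_ext] if_distrib[of "cscale _"])

definition count_virtual :: "letter list \<Rightarrow> nat" where "count_virtual w = length (filter (\<lambda>l. virtual (fst l)) w)"
definition count_proper :: "letter list \<Rightarrow> nat" where "count_proper w = length (filter (\<lambda>l. \<not> virtual (fst l)) w)"

fun inversions :: "letter list \<Rightarrow> nat" where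
  "inversions [] = 0"
| "inversions (l # w) = (if virtual (fst l) then 0 else count_virtual w) + inversions w"

lemma inversions_append: "inversions (A @ B) = inversions A + inversions B + count_proper A * count_virtual B"
  by (induction A) (auto simp: count_virtual_def count_proper_def algebra_simps)

lemma inversions_swap: "\<not> virtual (fst m) \<Longrightarrow> virtual (fst l) \<Longrightarrow> inversions (A @ [m, l] @ B) = Suc (inversions (A @ [l, m] @ B))"
  by (simp add: inversions_append count_virtual_def count_proper_def)

lemma inversions_pos: "inversions w > 0 \<Longrightarrow> \<exists>A m l B. w = A @ [m, l] @ B \<and> \<not> virtual (fst m) \<and> virtual (fst l)"
proof (induction w)
  case Nil then show ?case by simp
next
  case (Cons x w)
  show ?case
  proof (cases "inversions w > 0")
    case True
    then obtain A m l B where "w = A @ [m, l] @ B \<and> \<not> virtual (fst m) \<and> virtual (fst l)" using Cons.IH by blast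
    then show ?thesis by (metis append_Cons)
  next
    case False
    then have nx: "\<not> virtual (fst x)" and nv: "count_virtual w > 0" using Cons.prems by (auto split: if_splits)
    then obtain y w' where w: "w = y # w'" by (cases w) (auto simp: count_virtual_def)
    show ?thesis
    proof (cases "virtual (fst y)")
      case True
      then show ?thesis using nx w by (metis append_Nil append_Cons)
    next
      case False
      then have "count_virtual w' > 0" using nv w by (simp add: count_virtual_def)
      then have "inversions w > 0" using w False by simp
      then show ?thesis using \<open>\<not> inversions w > 0\<close> by simp
    qed
  qed
qed

lemma inversions_zero_Cons: "inversions (x # w) = 0 \<Longrightarrow> \<not> virtual (fst x) \<Longrightarrow> count_virtual w = 0"
  by (simp split: if_splits)

definition count_fst :: "sym \<Rightarrow> letter list \<Rightarrow> nat" where "count_fst g w = length (filter (\<lambda>l. fst l = g) w)"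
definition count_snd :: "sym \<Rightarrow> letter list \<Rightarrow> nat" where "count_snd g w = length (filter (\<lambda>l. snd l = g) w)"
definition balanced :: "letter list \<Rightarrow> bool" where "balanced w \<longleftrightarrow> (\<forall>g. virtual g \<longrightarrow> count_fst g w = count_snd g w)"

lemma balanced_replace:
  assumes "balanced (A @ X @ B)" "\<And>g. virtual g \<Longrightarrow> count_fst g Y + count_snd g X = count_fst g X + count_snd g Y"
  shows "balanced (A @ Y @ B)"
  unfolding balanced_def
proof (intro allI impI)
  fix g assume g: "virtual g"
  have h1: "count_fst g A + count_fst g X + count_fst g B = count_snd g A + count_snd g X + count_snd g B"
    using assms(1) g by (simp add: balanced_def count_fst_def count_snd_def add.assoc)
  have h2: "count_fst g Y + count_snd g X = count_fst g X + count_snd g Y" using assms(2) g by simp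
  have "count_fst g (A @ Y @ B) = count_fst g A + count_fst g Y + count_fst g B" "count_snd g (A @ Y @ B) = count_snd g A + count_snd g Y + count_snd g B"
    by (simp_all add: count_fst_def count_snd_def)
  then show "count_fst g (A @ Y @ B) = count_snd g (A @ Y @ B)" using h1 h2 by linarith
qed

lemma balanced_swap: "balanced (A @ [m, l] @ B) \<Longrightarrow> balanced (A @ [l, m] @ B)"
  by (rule balanced_replace[of A "[m, l]" B]) (auto simp: count_fst_def count_snd_def)

lemma balanced_contract_left: "balanced (A @ [(p,q),(q,d)] @ B) \<Longrightarrow> balanced (A @ [(p,d)] @ B)"
  by (rule balanced_replace[of A "[(p,q),(q,d)]" B]) (auto simp: count_fst_def count_snd_def)

lemma balanced_contract_right: "balanced (A @ [(p,q),(c,p)] @ B) \<Longrightarrow> balanced (A @ [(c,q)] @ B)"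
  by (rule balanced_replace[of A "[(p,q),(c,p)]" B]) (auto simp: count_fst_def count_snd_def)

lemma irregular_virtual_Cons:
  assumes b: "balanced (x # w')" and g: "virtual (fst x)"
  shows "irregular (x # w')"
proof -
  let ?g = "fst x"
  let ?r = "rev (x # w')"
  have e1: "take (Suc (length w')) ?r = ?r" by simp
  have e2: "take (length w') ?r = rev w'" by simp
  have "count_fst ?g (x # w') = count_snd ?g (x # w')" using b g by (simp add: balanced_def)
  then have "length (filter (\<lambda>l. snd l = ?g) (take (Suc (length w')) ?r)) > length (filter (\<lambda>l. fst l = ?g) (take (length w') ?r))"
    unfolding e1 e2 by (simp add: count_fst_def count_snd_def rev_filter[symmetric] split: if_splits)
  then show ?thesis unfolding irregular_def Let_def using g
    by (intro exI[of _ "length w'"] conjI) (auto intro!: exI[of _ ?g])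
qed

definition has_proper_rep :: "nat \<Rightarrow> letter list \<Rightarrow> bool" where
  "has_proper_rep n w \<longleftrightarrow> (\<exists>u. proper n u \<and> Poly_Mapping.single w 1 - u \<in> Irr n)"

lemma has_proper_rep_proper_word: "proper_word n w \<Longrightarrow> has_proper_rep n w"
  unfolding has_proper_rep_def using proper_single[of n w 1] Irr.zero
  by (intro exI[of _ "Poly_Mapping.single w 1"]) simp

lemma has_proper_rep_irregular: "valid_word n w \<Longrightarrow> irregular w \<Longrightarrow> has_proper_rep n w"
  unfolding has_proper_rep_def using Irr_irregular proper_zero by (intro exI[of _ 0]) simp

lemma has_proper_rep_no_inversions:
  assumes vw: "valid_word n w" and bw: "balanced w" and iw: "inversions w = 0"
  shows "has_proper_rep n w"
proof (cases "\<exists>l\<in>set w. virtual (fst l)")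
  case True
  then obtain x w' where w: "w = x # w'" by (cases w) auto
  have "virtual (fst x)"
  proof (rule ccontr)
    assume nx: "\<not> virtual (fst x)"
    then have "count_virtual w' = 0" using inversions_zero_Cons[of x w'] iw w by simp
    then show False using True nx w by (auto simp: count_virtual_def filter_empty_conv)
  qed
  then have "irregular w" using irregular_virtual_Cons bw w by simp
  then show ?thesis by (rule has_proper_rep_irregular[OF vw])
next
  case False
  have "proper_word n w"
    unfolding proper_word_def
  proof
    fix l assume l: "l \<in> set w"
    obtain a b where ab: "l = (a, b)" by (cases l)
    have na: "\<not> virtual a" using False l ab by auto
    have nb: "\<not> virtual b"
    proof
      assume vb: "virtual b"
      have "count_fst b w = 0" using False vb by (auto simp: count_fst_def filter_empty_conv)
      moreover have "count_snd b w \<noteq> 0" using l ab by (force simp: count_snd_def filter_empty_conv)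
      ultimately show False using bw vb by (simp add: balanced_def)
    qed
    have "valid_sym n a" "valid_sym n b" using vw l ab by (auto simp: valid_word_def)
    with na nb show "\<exists>i j. l = (Prop i, Prop j) \<and> i \<in> {1..n} \<and> j \<in> {1..n}"
      using ab by (cases a; cases b) auto
  qed
  then show ?thesis by (rule has_proper_rep_proper_word)
qed

lemma has_proper_rep_or_zero:
  "(P \<Longrightarrow> has_proper_rep n w) \<Longrightarrow>
     \<exists>u. proper n u \<and> (if P then Poly_Mapping.single w 1 else 0) - u \<in> Irr n"
  by (cases P) (auto simp: has_proper_rep_def intro!: exI[of _ 0] proper_zero Irr.zero)

text \<open>Straightening step: the relation for \<open>e\<^sub>p\<^sub>q e\<^sub>c\<^sub>d\<close>, multiplied by the surrounding words,
  expresses a word through its swap and two shorter words.\<close>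

lemma has_proper_rep_swap:
  assumes vw: "valid_word n (A @ [(p,q),(c,d)] @ B)"
    and swapped: "has_proper_rep n (A @ [(c,d),(p,q)] @ B)"
    and left: "q = c \<Longrightarrow> has_proper_rep n (A @ [(p,d)] @ B)"
    and right: "p = d \<Longrightarrow> has_proper_rep n (A @ [(c,q)] @ B)"
  shows "has_proper_rep n (A @ [(p,q),(c,d)] @ B)"
proof -
  let ?s = "sgn p q c d"
  let ?w = "A @ [(p,q),(c,d)] @ B"
  let ?x2 = "if q = c then Poly_Mapping.single (A @ [(p,d)] @ B) 1 else 0"
  let ?x3 = "if p = d then Poly_Mapping.single (A @ [(c,q)] @ B) 1 else 0"
  let ?J = "fmul (Poly_Mapping.single A 1) (fmul (rel p q c d) (Poly_Mapping.single B 1))"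
  have "valid_word n A" "valid_word n B" "valid_sym n p" "valid_sym n q" "valid_sym n c" "valid_sym n d"
    using vw by (auto simp: valid_word_def)
  then have J: "?J \<in> Jid n"
    by (intro Jid.mult Jid.gen) (simp_all add: valid_el_single)
  obtain u1 where u1: "proper n u1" "Poly_Mapping.single (A @ [(c,d),(p,q)] @ B) 1 - u1 \<in> Irr n"
    using swapped by (auto simp: has_proper_rep_def)
  obtain u2 where u2: "proper n u2" "?x2 - u2 \<in> Irr n"
    using has_proper_rep_or_zero[OF left] by blast
  obtain u3 where u3: "proper n u3" "?x3 - u3 \<in> Irr n"
    using has_proper_rep_or_zero[OF right] by blast
  let ?u = "cscale ?s u1 + u2 - cscale ?s u3"
  have "Poly_Mapping.single ?w 1 - ?u
      = ?J + cscale ?s (Poly_Mapping.single (A @ [(c,d),(p,q)] @ B) 1 - u1) + (?x2 - u2) - cscale ?s (?x3 - u3)"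
    unfolding fmul_single_rel_single by (simp add: cscale_diff algebra_simps)
  also have "\<dots> \<in> Irr n"
    by (intro Irr_diff Irr.add Irr_cscale Irr.rels J u1(2) u2(2) u3(2))
  finally have "Poly_Mapping.single ?w 1 - ?u \<in> Irr n" .
  moreover have "proper n ?u"
    by (intro proper_diff proper_add proper_cscale u1(1) u2(1) u3(1))
  ultimately show ?thesis
    unfolding has_proper_rep_def by blast
qed

lemma has_proper_rep_balanced: "valid_word n w \<Longrightarrow> balanced w \<Longrightarrow> has_proper_rep n w"
proof (induction w rule: wf_induct[OF wf_measures[of "[length, inversions]"]])
  case (1 w)
  have IH: "has_proper_rep n w'"
    if "(w', w) \<in> measures [length, inversions]" "valid_word n w'" "balanced w'" for w'
    using "1.IH" that by blast
  have vw: "valid_word n w" and bw: "balanced w" by (fact "1.prems")+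
  show ?case
  proof (cases "inversions w = 0")
    case True
    then show ?thesis using has_proper_rep_no_inversions vw bw by blast
  next
    case False
    then obtain A m l B where w: "w = A @ [m, l] @ B" and nm: "\<not> virtual (fst m)" and vl: "virtual (fst l)"
      using inversions_pos by blast
    obtain p q c d where m: "m = (p, q)" and l: "l = (c, d)" by (cases m, cases l)
    have vw': "valid_word n (A @ [(c,d),(p,q)] @ B)" "valid_word n (A @ [(p,d)] @ B)"
      "valid_word n (A @ [(c,q)] @ B)"
      using vw by (auto simp: w m l valid_word_def)
    show ?thesis
      unfolding w m l
    proof (rule has_proper_rep_swap)
      show "valid_word n (A @ [(p,q),(c,d)] @ B)" using vw w m l by simp
      have "balanced (A @ [(c,d),(p,q)] @ B)" using balanced_swap bw w m l by simp
      moreover have "(A @ [(c,d),(p,q)] @ B, w) \<in> measures [length, inversions]"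
        using inversions_swap[OF nm vl, of A B] w m l by simp
      ultimately show "has_proper_rep n (A @ [(c,d),(p,q)] @ B)" using IH vw'(1) by blast
      show "has_proper_rep n (A @ [(p,d)] @ B)" if "q = c"
      proof (rule IH)
        show "balanced (A @ [(p,d)] @ B)" using balanced_contract_left[of A p q d B] bw w m l that by simp
        show "(A @ [(p,d)] @ B, w) \<in> measures [length, inversions]" using w by simp
      qed (fact vw')
      show "has_proper_rep n (A @ [(c,q)] @ B)" if "p = d"
      proof (rule IH)
        show "balanced (A @ [(c,q)] @ B)" using balanced_contract_right[of A p q c B] bw w m l that by simp
        show "(A @ [(c,q)] @ B, w) \<in> measures [length, inversions]" using w by simp
      qed (fact vw')
    qed
  qed
qed

lemma proj_single_balanced:
  assumes "valid_word n w" "balanced w"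
  shows "proper n (proj n (Poly_Mapping.single w 1))"
    and "Poly_Mapping.single w 1 - proj n (Poly_Mapping.single w 1) \<in> Irr n"
proof -
  have "\<exists>u. proper n u \<and> Poly_Mapping.single w 1 - u \<in> Irr n"
    using has_proper_rep_balanced[OF assms] by (simp add: has_proper_rep_def)
  from someI_ex[OF this] show "proper n (proj n (Poly_Mapping.single w 1))"
    and "Poly_Mapping.single w 1 - proj n (Poly_Mapping.single w 1) \<in> Irr n"
    by (simp_all add: proj_def)
qed

lemma koszul_proj_single:
  assumes "valid_word n w" "balanced w"
  shows "koszul n (proj n (Poly_Mapping.single w 1)) = evaluate (rep_word n w vacuum)"
proof -
  have "act n (Poly_Mapping.single w 1 - proj n (Poly_Mapping.single w 1)) vacuum = 0"
    using proj_single_balanced(2)[OF assms] by (rule act_Irr_vacuum)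
  then have "act n (proj n (Poly_Mapping.single w 1)) vacuum = rep_word n w vacuum"
    by (simp add: act_diff)
  with proj_single_balanced(1)[OF assms] show ?thesis
    by (simp add: koszul_eq_evaluate_act)
qed

lemma capelli_word_valid:
  "\<forall>t\<in>{1..h}. i t \<in> {1..n} \<and> j t \<in> {1..n} \<Longrightarrow> valid_word n (capelli_word h i j \<alpha>)"
  by (auto simp: capelli_word_def valid_word_def simp del: upt_Suc)

lemma capelli_word_balanced: "balanced (capelli_word h i j \<alpha>)"
  unfolding balanced_def
proof (intro allI impI)
  fix g :: sym assume g: "virtual g"
  have "count_fst g (capelli_word h i j \<alpha>) = length (filter (\<lambda>t. Alpha (\<alpha> t) = g) [1..<h+1])"
    and "count_snd g (capelli_word h i j \<alpha>) = length (filter (\<lambda>t. Alpha (\<alpha> t) = g) [1..<h+1])"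
    using g by (cases g; simp del: upt_Suc add: capelli_word_def count_fst_def count_snd_def filter_map o_def)+
  then show "count_fst g (capelli_word h i j \<alpha>) = count_snd g (capelli_word h i j \<alpha>)" by simp
qed

theorem mainTheorem7:
  fixes n h :: nat and i j \<alpha> :: "nat \<Rightarrow> nat"
  assumes "h \<ge> 1"
    and "\<forall>t\<in>{1..h}. i t \<in> {1..n} \<and> j t \<in> {1..n}"
    and "inj_on \<alpha> {1..h}"
  shows "koszul n (capelli n h i j \<alpha>)
           = const ((-1) ^ (h choose 2)) * (\<Prod>t\<in>{1..h}. var (i t) (j t))"
proof -
  have "koszul n (capelli n h i j \<alpha>) = evaluate (rep_word n (capelli_word h i j \<alpha>) vacuum)"
    unfolding capelli_def
    using capelli_word_valid[OF assms(2)] capelli_word_balanced by (rule koszul_proj_single)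
  also have "\<dots> = evaluate (cscale ((-1) ^ (h choose 2)) (proper_product i j h))"
    by (simp add: rep_word_capelli_word[OF assms(2,3)])
  also have "\<dots> = const ((-1) ^ (h choose 2)) * (\<Prod>t\<in>{1..h}. var (i t) (j t))"
    by (simp add: is_linearD[OF is_linear_evaluate] proper_product_evaluate const_mult)
  finally show ?thesis .
qed

end
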